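(* Let $D$ be a finite set with $|D|\geq 2$, let $P:D^2\to\{0,1\}$ be a binary predicate, and let $0<\varepsilon<1$. (1) If there exist two-element subsets $B,C\subseteq D$ (not necessarily disjoint) such that the restriction $P|_{B\times C}$ is a singleton, then there exists an instance $I$ of $\mathrm{CSP}(P)$ such that every $\varepsilon$-sparsifier of $I$ has $\Omega(n^2)$ constraints, where $n$ is the number of variables of $I$ (i.e., there is a constant $c>0$ such that for infinitely many $n$ there is an instance on $n$ variables all of whose $\varepsilon$-sparsifiers have at least $cn^2$ constraints). (2) Otherwise (i.e., if $P|_{B\times C}$ is not a singleton for any two-element subsets $B,C\subseteq D$), for every instance $I$ of $\mathrm{CSP}(P)$ on $n$ variables there exists an $\varepsilon$-sparsifier of $I$ with $O(\varepsilon^{-2}n)$ constraints, where the implied constant does not depend on $I$, $n$ or $\varepsilon$.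
   Context: A binary CSP instance is $I=(V,D,\Pi,w)$ where $V$ is a finite set of $n=|V|$ variables, $D$ a finite domain, $\Pi$ a set of constraints, each a pair $\langle (u,v),P\rangle$ with $u,v\in V$ distinct and $P:D^2\to\{0,1\}$, and $w:\Pi\to\mathbb{R}_{>0}$ positive weights. $\mathrm{CSP}(P)$ is the class of instances in which every constraint uses the predicate $P$. For an assignment $A:V\to D$, $\mathrm{Val}_I(A)=\sum_{\pi=\langle(u,v),P\rangle\in\Pi} w(\pi)P(A(u),A(v))$. For $0<\varepsilon<1$, an $\varepsilon$-sparsifier of $I$ is an instance $I_\varepsilon=(V,D,\Pi_\varepsilon,w_\varepsilon)$ with $\Pi_\varepsilon\subseteq\Pi$ and $w_\varepsilon:\Pi_\varepsilon\to\mathbb{R}_{>0}$ such that for every $A:V\to D$, $(1-\varepsilon)\mathrm{Val}_I(A)\le \mathrm{Val}_{I_\varepsilon}(A)\le(1+\varepsilon)\mathrm{Val}_I(A)$; its number of constraints is $|\Pi_\varepsilon|$. A predicate is a singleton if exactly one tuple is mapped to $1$. For $B,C\subseteq D$, $P|_{B\times C}$ denotes the restriction of $P$ to $B\times C$. *)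

theory Defs
  imports Complex_Main
begin

text \<open>A binary CSP(P) instance on variable set V: since all constraints use the same
predicate P, a constraint is determined by its ordered scope (u,v) with u, v distinct
variables.\<close>

definition csp_instance :: "'v set \<Rightarrow> ('v \<times> 'v) set \<Rightarrow> ('v \<times> 'v \<Rightarrow> real) \<Rightarrow> bool" where
  "csp_instance V E w \<longleftrightarrow> finite V \<and> E \<subseteq> {(u, v). u \<in> V \<and> v \<in> V \<and> u \<noteq> v}
     \<and> (\<forall>e\<in>E. w e > 0)"

definition csp_val :: "('d \<Rightarrow> 'd \<Rightarrow> bool) \<Rightarrow> ('v \<times> 'v) set \<Rightarrow> ('v \<times> 'v \<Rightarrow> real)
    \<Rightarrow> ('v \<Rightarrow> 'd) \<Rightarrow> real" where
  "csp_val P E w A = (\<Sum>e\<in>E. w e * (if P (A (fst e)) (A (snd e)) then 1 else 0))"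

definition is_sparsifier :: "('d \<Rightarrow> 'd \<Rightarrow> bool) \<Rightarrow> real \<Rightarrow> ('v \<times> 'v) set \<Rightarrow> ('v \<times> 'v \<Rightarrow> real)
    \<Rightarrow> ('v \<times> 'v) set \<Rightarrow> ('v \<times> 'v \<Rightarrow> real) \<Rightarrow> bool" where
  "is_sparsifier P eps E w E' w' \<longleftrightarrow> E' \<subseteq> E \<and> (\<forall>e\<in>E'. w' e > 0) \<and>
     (\<forall>A :: 'v \<Rightarrow> 'd. (1 - eps) * csp_val P E w A \<le> csp_val P E' w' A
                   \<and> csp_val P E' w' A \<le> (1 + eps) * csp_val P E w A)"

definition singleton_restr :: "('d \<Rightarrow> 'd \<Rightarrow> bool) \<Rightarrow> 'd set \<Rightarrow> 'd set \<Rightarrow> bool" where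
  "singleton_restr P B C \<longleftrightarrow> card {(b, c). b \<in> B \<and> c \<in> C \<and> P b c} = 1"

end

theory Submission
  imports Defs "Jordan_Normal_Form.Determinant"
begin

text \<open>If P restricted to B \<times> C is the singleton {(b1, c1)}, then on the complete bipartite
  instance every constraint (i, j) is the only one satisfied by the assignment sending i to
  b1, j to c1 and all other variables to the remaining elements b2 of B and c2 of C, so no
  sparsifier can drop a constraint: it keeps n^2/4 of them.

  Otherwise the nonempty sets {y. \<not> P x y} are pairwise equal or disjoint, which makes
  2 P(x, y) a sum of cut indicators [f x \<noteq> g y]. The value of an instance is then a sum of
  cut values of the bipartite double cover of its constraint graph, and such a cut value is
  a sum of squares of linear forms in 2n variables. The barrier method of Batson, Spielman and
  Srivastava, applied after Gram--Schmidt has put these linear forms in isotropic position,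
  reweights O(n / \<epsilon>^2) of them so that the sum of squares, hence every cut and every
  value, is preserved up to a factor 1 \<plusminus> \<epsilon>.\<close>

section \<open>Square matrices on the first m coordinates\<close>

text \<open>A matrix of dimension m is a function on pairs of indices of which only the block
  below m matters; mat_on m A says that A vanishes outside that block, which is what makes
  the identity and inverse laws equalities of functions.\<close>

type_synonym rmat = "nat \<Rightarrow> nat \<Rightarrow> real"
type_synonym rvec = "nat \<Rightarrow> real"

definition mat_on :: "nat \<Rightarrow> rmat \<Rightarrow> bool" where
  "mat_on m A \<longleftrightarrow> (\<forall>i j. (m \<le> i \<or> m \<le> j) \<longrightarrow> A i j = 0)"

definition mmul :: "nat \<Rightarrow> rmat \<Rightarrow> rmat \<Rightarrow> rmat" where
  "mmul m A B = (\<lambda>i j. if i < m \<and> j < m then (\<Sum>k<m. A i k * B k j) else 0)"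

definition mat_one :: "nat \<Rightarrow> rmat" where
  "mat_one m = (\<lambda>i j. if i < m \<and> i = j then 1 else 0)"

definition outer :: "nat \<Rightarrow> rvec \<Rightarrow> rmat" where
  "outer m v = (\<lambda>i j. if i < m \<and> j < m then v i * v j else 0)"

definition lcomb :: "real \<Rightarrow> rmat \<Rightarrow> real \<Rightarrow> rmat \<Rightarrow> rmat" where
  "lcomb a A b B = (\<lambda>i j. a * A i j + b * B i j)"

definition mvec :: "nat \<Rightarrow> rmat \<Rightarrow> rvec \<Rightarrow> rvec" where
  "mvec m A x = (\<lambda>i. if i < m then (\<Sum>j<m. A i j * x j) else 0)"

definition dot :: "nat \<Rightarrow> rvec \<Rightarrow> rvec \<Rightarrow> real" where
  "dot m x y = (\<Sum>i<m. x i * y i)"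

definition quad :: "nat \<Rightarrow> rmat \<Rightarrow> rvec \<Rightarrow> real" where
  "quad m A x = dot m x (mvec m A x)"

definition tr :: "nat \<Rightarrow> rmat \<Rightarrow> real" where
  "tr m A = (\<Sum>i<m. A i i)"

definition sym_mat :: "rmat \<Rightarrow> bool" where
  "sym_mat A \<longleftrightarrow> (\<forall>i j. A i j = A j i)"

definition nonzero :: "nat \<Rightarrow> rvec \<Rightarrow> bool" where
  "nonzero m x \<longleftrightarrow> (\<exists>i<m. x i \<noteq> 0)"

definition pos_def :: "nat \<Rightarrow> rmat \<Rightarrow> bool" where
  "pos_def m A \<longleftrightarrow> (\<forall>x. nonzero m x \<longrightarrow> 0 < quad m A x)"

definition pos_semidef :: "nat \<Rightarrow> rmat \<Rightarrow> bool" where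
  "pos_semidef m A \<longleftrightarrow> (\<forall>x. 0 \<le> quad m A x)"

lemma mat_on_mmul [simp]: "mat_on m (mmul m A B)"
  by (auto simp: mat_on_def mmul_def)

lemma mat_on_mat_one [simp]: "mat_on m (mat_one m)"
  by (auto simp: mat_on_def mat_one_def)

lemma mat_on_outer [simp]: "mat_on m (outer m v)"
  by (auto simp: mat_on_def outer_def)

lemma mat_on_lcomb [simp]: "mat_on m A \<Longrightarrow> mat_on m B \<Longrightarrow> mat_on m (lcomb a A b B)"
  by (auto simp: mat_on_def lcomb_def)

lemma sym_mat_mat_one [simp]: "sym_mat (mat_one m)"
  by (auto simp: sym_mat_def mat_one_def)

lemma sym_mat_outer [simp]: "sym_mat (outer m v)"
  by (auto simp: sym_mat_def outer_def)

lemma sym_mat_lcomb [simp]: "sym_mat A \<Longrightarrow> sym_mat B \<Longrightarrow> sym_mat (lcomb a A b B)"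
  by (auto simp: sym_mat_def lcomb_def)

lemmas delta_mult_simps = if_distrib[of "\<lambda>x. x * _"] if_distrib[of "\<lambda>x. _ * x"]

lemma mmul_assoc: "mmul m (mmul m A B) C = mmul m A (mmul m B C)"
  by (intro ext)
    (auto simp: mmul_def sum_distrib_left sum_distrib_right mult.assoc intro: sum.swap)

lemma mmul_mat_one_left: "mat_on m A \<Longrightarrow> mmul m (mat_one m) A = A"
  by (intro ext) (auto simp: mmul_def mat_one_def mat_on_def delta_mult_simps cong: if_cong)

lemma mmul_mat_one_right: "mat_on m A \<Longrightarrow> mmul m A (mat_one m) = A"
  by (intro ext) (auto simp: mmul_def mat_one_def mat_on_def delta_mult_simps cong: if_cong)

lemma mmul_lcomb_left: "mmul m (lcomb a A b B) C = lcomb a (mmul m A C) b (mmul m B C)"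
  by (intro ext) (auto simp: mmul_def lcomb_def sum.distrib sum_distrib_left algebra_simps)

lemma mmul_lcomb_right: "mmul m C (lcomb a A b B) = lcomb a (mmul m C A) b (mmul m C B)"
  by (intro ext) (auto simp: mmul_def lcomb_def sum.distrib sum_distrib_left algebra_simps)

lemma mmul_transpose: "mmul m A B i j = mmul m (\<lambda>i j. B j i) (\<lambda>i j. A j i) j i"
  by (auto simp: mmul_def mult.commute)

lemma mmul_sym_mat_swap: "sym_mat A \<Longrightarrow> sym_mat B \<Longrightarrow> mmul m B A i j = mmul m A B j i"
  by (auto simp: mmul_def sym_mat_def mult.commute)

lemma tr_lcomb: "tr m (lcomb a A b B) = a * tr m A + b * tr m B"
  by (simp add: tr_def lcomb_def sum.distrib sum_distrib_left)

lemma tr_mmul_commute: "tr m (mmul m A B) = tr m (mmul m B A)"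
  unfolding tr_def mmul_def by (simp add: mult.commute) (rule sum.swap)

lemma tr_outer: "tr m (outer m w) = dot m w w"
  by (simp add: tr_def outer_def dot_def)

lemma mvec_mmul: "mvec m (mmul m A B) x = mvec m A (mvec m B x)"
  by (intro ext)
    (auto simp: mvec_def mmul_def sum_distrib_left sum_distrib_right mult.assoc intro: sum.swap)

lemma mvec_mat_one: "mvec m (mat_one m) x i = (if i < m then x i else 0)"
  by (auto simp: mvec_def mat_one_def delta_mult_simps cong: if_cong)

lemma mvec_cong: "(\<And>i. i < m \<Longrightarrow> x i = x' i) \<Longrightarrow> mvec m A x = mvec m A x'"
  unfolding mvec_def by (intro ext) (auto intro: sum.cong)

lemma dot_commute: "dot m x y = dot m y x"
  by (simp add: dot_def mult.commute)

lemma dot_cong: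
  "(\<And>i. i < m \<Longrightarrow> x i = x' i) \<Longrightarrow> (\<And>i. i < m \<Longrightarrow> y i = y' i) \<Longrightarrow> dot m x y = dot m x' y'"
  unfolding dot_def by (intro sum.cong) auto

lemma dot_self_nonneg: "0 \<le> dot m x x"
  by (simp add: dot_def sum_nonneg)

lemma dot_self_pos: "nonzero m x \<Longrightarrow> 0 < dot m x x"
  unfolding nonzero_def dot_def by (auto intro!: sum_pos2 simp: zero_less_mult_iff)

lemma dot_not_nonzero: "\<not> nonzero m x \<Longrightarrow> dot m x y = 0"
  unfolding nonzero_def dot_def by (intro sum.neutral) auto

lemma dot_mvec_sym_mat:
  assumes "sym_mat A"
  shows "dot m x (mvec m A y) = dot m (mvec m A x) y"
proof -
  have "dot m x (mvec m A y) = (\<Sum>i<m. \<Sum>j<m. x i * A j i * y j)"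
    using assms by (simp add: dot_def mvec_def sum_distrib_left sym_mat_def mult_ac)
  also have "\<dots> = dot m (mvec m A x) y"
    by (subst sum.swap) (simp add: dot_def mvec_def sum_distrib_left sum_distrib_right mult_ac)
  finally show ?thesis .
qed

lemma quad_expand: "quad m A x = (\<Sum>i<m. \<Sum>j<m. x i * A i j * x j)"
  by (simp add: quad_def dot_def mvec_def sum_distrib_left mult.assoc)

lemma quad_lcomb: "quad m (lcomb a A b B) x = a * quad m A x + b * quad m B x"
  by (simp add: quad_expand lcomb_def sum.distrib sum_distrib_left algebra_simps)

lemma quad_mat_one: "quad m (mat_one m) x = dot m x x"
  by (simp add: quad_def dot_def mvec_mat_one)

lemma quad_outer: "quad m (outer m v) x = (dot m v x)^2"
  by (simp add: quad_expand outer_def dot_def power2_eq_square sum_distrib_left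
      sum_distrib_right algebra_simps)

lemma quad_scale: "quad m (\<lambda>i j. a * A i j) x = a * quad m A x"
  unfolding quad_expand by (simp add: sum_distrib_left mult_ac)

lemma quad_sum: "quad m (\<lambda>i j. \<Sum>e\<in>I. f e i j) z = (\<Sum>e\<in>I. quad m (f e) z)"
  unfolding quad_expand sum_distrib_left sum_distrib_right
  by (subst sum.swap) (simp add: sum.swap[of _ I])

lemma quad_not_nonzero: "\<not> nonzero m x \<Longrightarrow> quad m A x = 0"
  unfolding quad_def by (rule dot_not_nonzero)

lemma quad_mmul_self: "sym_mat N \<Longrightarrow> quad m (mmul m N N) x = dot m (mvec m N x) (mvec m N x)"
  unfolding quad_def mvec_mmul by (rule dot_mvec_sym_mat)

lemma pos_def_imp_pos_semidef: "pos_def m A \<Longrightarrow> pos_semidef m A"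
  unfolding pos_def_def pos_semidef_def using quad_not_nonzero by (metis order_less_le order_refl)

lemma pos_semidef_outer: "pos_semidef m (outer m v)"
  by (simp add: pos_semidef_def quad_outer)

lemma pos_semidef_mat_one: "pos_semidef m (mat_one m)"
  by (simp add: pos_semidef_def quad_mat_one dot_self_nonneg)

lemma pos_def_add_pos_semidef:
  "pos_def m A \<Longrightarrow> pos_semidef m B \<Longrightarrow> 0 \<le> t \<Longrightarrow> pos_def m (lcomb 1 A t B)"
  unfolding pos_def_def pos_semidef_def by (simp add: quad_lcomb add_pos_nonneg)

lemma pos_def_scaled_one: "0 < c \<Longrightarrow> pos_def m (\<lambda>i j. c * mat_one m i j)"
  unfolding pos_def_def by (simp add: quad_scale quad_mat_one dot_self_pos)

definition is_inv :: "nat \<Rightarrow> rmat \<Rightarrow> rmat \<Rightarrow> bool" where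
  "is_inv m M N \<longleftrightarrow> mat_on m N \<and> mmul m M N = mat_one m \<and> mmul m N M = mat_one m"

definition inv_mat :: "nat \<Rightarrow> rmat \<Rightarrow> rmat" where
  "inv_mat m M = (SOME N. is_inv m M N)"

definition to_mat :: "nat \<Rightarrow> rmat \<Rightarrow> real Matrix.mat" where
  "to_mat m A = Matrix.mat m m (\<lambda>(i, j). A i j)"

definition of_mat :: "nat \<Rightarrow> real Matrix.mat \<Rightarrow> rmat" where
  "of_mat m B = (\<lambda>i j. if i < m \<and> j < m then B $$ (i, j) else 0)"

lemma of_to_mat: "mat_on m A \<Longrightarrow> of_mat m (to_mat m A) = A"
  by (intro ext) (auto simp: of_mat_def to_mat_def mat_on_def)

lemma of_mat_one: "of_mat m (1\<^sub>m m) = mat_one m"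
  by (intro ext) (auto simp: of_mat_def mat_one_def)

lemma of_mat_mult:
  assumes "B \<in> carrier_mat m m" "C \<in> carrier_mat m m"
  shows "of_mat m (B * C) = mmul m (of_mat m B) (of_mat m C)"
  using assms by (intro ext) (auto simp: of_mat_def mmul_def scalar_prod_def intro!: sum.cong)

lemma mvec_to_mat:
  assumes "v \<in> carrier_vec m" "i < m"
  shows "mvec m A (\<lambda>k. v $ k) i = (to_mat m A *\<^sub>v v) $ i"
  using assms by (auto simp: mvec_def to_mat_def scalar_prod_def intro!: sum.cong)

lemma is_inv_exists:
  assumes M: "mat_on m M" and inj: "\<And>x. nonzero m x \<Longrightarrow> nonzero m (mvec m M x)"
  shows "\<exists>N. is_inv m M N"
proof -
  define A where "A = to_mat m M"
  have A: "A \<in> carrier_mat m m" by (simp add: A_def to_mat_def)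
  have "det A \<noteq> 0"
  proof
    assume "det A = 0"
    then obtain v where v: "v \<in> carrier_vec m" "v \<noteq> 0\<^sub>v m" "A *\<^sub>v v = 0\<^sub>v m"
      using det_0_iff_vec_prod_zero_field[OF A] by blast
    have "nonzero m (\<lambda>k. v $ k)"
      using v(1,2) by (auto simp: nonzero_def intro!: eq_vecI)
    then obtain i where "i < m" "mvec m M (\<lambda>k. v $ k) i \<noteq> 0"
      using inj by (auto simp: nonzero_def)
    then show False using v(1,3) by (simp add: mvec_to_mat A_def)
  qed
  from det_non_zero_imp_unit[OF A this, of "()"]
  obtain B where B: "B \<in> carrier_mat m m" "B * A = 1\<^sub>m m" "A * B = 1\<^sub>m m"
    unfolding Units_def ring_mat_def by auto
  have "mmul m M (of_mat m B) = mat_one m" "mmul m (of_mat m B) M = mat_one m"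
    using of_mat_mult[OF A B(1)] of_mat_mult[OF B(1) A] B(2,3)
    by (simp_all add: A_def of_to_mat[OF M] of_mat_one)
  moreover have "mat_on m (of_mat m B)" by (simp add: mat_on_def of_mat_def)
  ultimately show ?thesis unfolding is_inv_def by blast
qed

lemma is_inv_unique:
  assumes "is_inv m M N" "is_inv m M N'"
  shows "N = N'"
proof -
  have "N' = mmul m N' (mmul m M N)"
    using assms by (simp add: is_inv_def mmul_mat_one_right)
  also have "\<dots> = N" by (metis assms is_inv_def mmul_assoc mmul_mat_one_left)
  finally show ?thesis by simp
qed

lemma mvec_is_inv: "is_inv m M N \<Longrightarrow> i < m \<Longrightarrow> mvec m M (mvec m N x) i = x i"
  unfolding is_inv_def by (metis mvec_mmul mvec_mat_one)

lemma pos_def_mvec_nonzero: "pos_def m M \<Longrightarrow> nonzero m x \<Longrightarrow> nonzero m (mvec m M x)"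
  unfolding pos_def_def quad_def using dot_not_nonzero dot_commute by (metis less_irrefl)

lemma is_inv_inv_mat: "mat_on m M \<Longrightarrow> pos_def m M \<Longrightarrow> is_inv m M (inv_mat m M)"
  unfolding inv_mat_def using is_inv_exists pos_def_mvec_nonzero by (metis someI_ex)

lemma inv_mat_eqI: "mat_on m M \<Longrightarrow> pos_def m M \<Longrightarrow> is_inv m M N \<Longrightarrow> inv_mat m M = N"
  using is_inv_inv_mat is_inv_unique by blast

lemma mat_on_inv_mat: "mat_on m M \<Longrightarrow> pos_def m M \<Longrightarrow> mat_on m (inv_mat m M)"
  using is_inv_inv_mat is_inv_def by blast

lemma sym_mat_inv_mat:
  assumes "mat_on m M" "pos_def m M" "sym_mat M"
  shows "sym_mat (inv_mat m M)"
proof -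
  let ?N = "inv_mat m M" and ?T = "\<lambda>i j. inv_mat m M j i"
  have N: "is_inv m M ?N" using is_inv_inv_mat assms by blast
  have M: "(\<lambda>i j. M j i) = M" using assms(3) by (auto simp: sym_mat_def)
  have "mmul m M ?T i j = mat_one m i j" for i j
    using mmul_transpose[of m M ?T i j] N M by (auto simp: is_inv_def mat_one_def)
  moreover have "mmul m ?T M i j = mat_one m i j" for i j
    using mmul_transpose[of m ?T M i j] N M by (auto simp: is_inv_def mat_one_def)
  moreover have "mat_on m ?T" using N by (auto simp: is_inv_def mat_on_def)
  ultimately have "is_inv m M ?T" by (simp add: is_inv_def fun_eq_iff)
  then have "?N = ?T" using inv_mat_eqI assms by blast
  then show ?thesis unfolding sym_mat_def by metis
qed

lemma pos_def_inv_mat: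
  assumes "mat_on m M" "pos_def m M" "sym_mat M"
  shows "pos_def m (inv_mat m M)"
  unfolding pos_def_def
proof (intro allI impI)
  fix x assume x: "nonzero m x"
  let ?N = "inv_mat m M"
  have N: "is_inv m M ?N" using is_inv_inv_mat assms by blast
  let ?y = "mvec m ?N x"
  have y: "nonzero m ?y"
  proof (rule ccontr)
    assume "\<not> nonzero m ?y"
    then have "mvec m M ?y = mvec m M (\<lambda>_. 0)" by (intro mvec_cong) (auto simp: nonzero_def)
    have "x i = 0" if "i < m" for i
    proof -
      have "x i = mvec m M ?y i" using mvec_is_inv[OF N that] by simp
      also have "\<dots> = mvec m M (\<lambda>_. 0) i" using \<open>mvec m M ?y = _\<close> by simp
      finally show ?thesis by (simp add: mvec_def)
    qed
    then show False using x by (auto simp: nonzero_def)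
  qed
  have "quad m ?N x = dot m (mvec m M ?y) ?y"
    unfolding quad_def by (rule dot_cong) (simp_all add: mvec_is_inv[OF N])
  also have "\<dots> = quad m M ?y" by (simp add: quad_def dot_commute)
  finally show "0 < quad m ?N x" using assms(2) y by (simp add: pos_def_def)
qed

lemma tr_scaled_one: "tr m (\<lambda>i j. a * mat_one m i j) = a * real m"
  by (simp add: tr_def mat_one_def)

lemma inv_mat_scaled_one:
  assumes "0 < c"
  shows "inv_mat m (\<lambda>i j. c * mat_one m i j) = (\<lambda>i j. (1/c) * mat_one m i j)"
proof (rule inv_mat_eqI)
  show "mat_on m (\<lambda>i j. c * mat_one m i j)" by (simp add: mat_on_def mat_one_def)
  show "pos_def m (\<lambda>i j. c * mat_one m i j)" using assms by (rule pos_def_scaled_one)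
  have prod: "mmul m (\<lambda>i j. a * mat_one m i j) (\<lambda>i j. b * mat_one m i j)
      = (\<lambda>i j. (a * b) * mat_one m i j)" for a b
    by (intro ext) (auto simp: mmul_def mat_one_def delta_mult_simps cong: if_cong)
  show "is_inv m (\<lambda>i j. c * mat_one m i j) (\<lambda>i j. (1/c) * mat_one m i j)"
    unfolding is_inv_def prod using assms by (simp add: mat_on_def mat_one_def)
qed

lemma discriminant_le_of_nonneg:
  fixes a b c :: real
  assumes nonneg: "\<And>t. 0 \<le> a + 2*t*c + t^2*b" and "0 \<le> b"
  shows "c^2 \<le> a*b"
proof (cases "b = 0")
  case True
  have "c = 0"
  proof (rule ccontr)
    assume "c \<noteq> 0"
    have "0 \<le> a + 2*(-(a+1)/(2*c))*c + (-(a+1)/(2*c))^2*b" by (rule nonneg)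
    then show False using True \<open>c \<noteq> 0\<close> by (simp add: field_simps)
  qed
  then show ?thesis using True by simp
next
  case False
  then have b: "b > 0" using assms(2) by simp
  have "0 \<le> a + 2*(-c/b)*c + (-c/b)^2*b" by (rule nonneg)
  then have "0 \<le> a - c^2/b" using b by (simp add: field_simps power2_eq_square)
  then show ?thesis using b by (simp add: field_simps)
qed

lemma quad_cauchy_schwarz:
  assumes "sym_mat A" "pos_semidef m A"
  shows "(dot m x (mvec m A y))^2 \<le> quad m A x * quad m A y"
proof (rule discriminant_le_of_nonneg)
  have "quad m A (\<lambda>k. x k + t * y k) = quad m A x + t * dot m x (mvec m A y)
      + t * dot m y (mvec m A x) + t^2 * quad m A y" for t
    unfolding quad_expand dot_def mvec_def
    by (simp add: sum.distrib sum_distrib_left algebra_simps power2_eq_square)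
  moreover have "dot m y (mvec m A x) = dot m x (mvec m A y)"
    using assms(1) by (metis dot_commute dot_mvec_sym_mat)
  ultimately show "0 \<le> quad m A x + 2*t*dot m x (mvec m A y) + t^2 * quad m A y" for t
    using assms(2) unfolding pos_semidef_def by (metis mult_2 distrib_right add.assoc)
  show "0 \<le> quad m A y" using assms(2) by (simp add: pos_semidef_def)
qed

lemma dot_sq_le_quad_inv_mat:
  assumes "mat_on m M" "sym_mat M" "pos_def m M"
  shows "(dot m v x)^2 \<le> quad m (inv_mat m M) v * quad m M x"
proof -
  let ?N = "inv_mat m M"
  have N: "is_inv m M ?N" using is_inv_inv_mat assms by blast
  have "dot m (mvec m ?N v) (mvec m M x) = dot m (mvec m M (mvec m ?N v)) x"
    by (rule dot_mvec_sym_mat[OF assms(2)])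
  also have "\<dots> = dot m v x" by (rule dot_cong) (simp_all add: mvec_is_inv[OF N])
  finally have "dot m v x = dot m (mvec m ?N v) (mvec m M x)" by simp
  moreover have "quad m M (mvec m ?N v) = quad m ?N v"
    unfolding quad_def by (subst dot_commute, rule dot_cong) (simp_all add: mvec_is_inv[OF N])
  ultimately show ?thesis
    using quad_cauchy_schwarz[OF assms(2) pos_def_imp_pos_semidef[OF assms(3)],
        of "mvec m ?N v" x]
    by (simp add: dot_commute mult.commute)
qed

lemma quad_two_point:
  assumes "i < m" "j < m"
  shows "quad m Y (\<lambda>k. a * (if k = i then 1 else 0) + b * (if k = j then 1 else 0))
     = a * a * Y i i + a * b * Y i j + b * a * Y j i + b * b * Y j j"
proof -
  let ?z = "\<lambda>k. a * (if k = i then 1 else 0) + b * (if k = j then 1 else 0)"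
  have two: "(\<Sum>k<m. f k * ?z k) = a * f i + b * f j" for f :: "nat \<Rightarrow> real"
    using assms by (simp add: algebra_simps sum.distrib delta_mult_simps cong: if_cong)
  have "mvec m Y ?z l = a * Y l i + b * Y l j" if "l < m" for l
    using two[of "Y l"] that by (simp add: mvec_def)
  then have "quad m Y ?z = (\<Sum>l<m. (a * Y l i + b * Y l j) * ?z l)"
    unfolding quad_def dot_def by (intro sum.cong refl) (simp add: mult.commute)
  also have "\<dots> = a * (a * Y i i + b * Y i j) + b * (a * Y j i + b * Y j j)"
    by (rule two)
  finally show ?thesis by (simp add: algebra_simps)
qed

text \<open>Summing the nonnegative values of Y at the vectors x_j e_i - x_i e_j over all i, j
  gives twice tr Y |x|^2 - x^T Y x.\<close>

lemma quad_le_tr: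
  assumes "pos_semidef m Y"
  shows "quad m Y x \<le> tr m Y * dot m x x"
proof -
  let ?z = "\<lambda>i j k. x j * (if k = i then 1 else 0) + (- x i) * (if k = j then 1 else 0)"
  have "0 \<le> (\<Sum>i<m. \<Sum>j<m. quad m Y (?z i j))"
    using assms by (intro sum_nonneg) (simp add: pos_semidef_def)
  also have "\<dots> = (\<Sum>i<m. \<Sum>j<m. (x j * x j * Y i i + x i * x i * Y j j)
      - (x i * Y i j * x j + x i * x j * Y j i))"
  proof (intro sum.cong refl)
    fix i j assume "i \<in> {..<m}" "j \<in> {..<m}"
    then show "quad m Y (?z i j) = (x j * x j * Y i i + x i * x i * Y j j)
        - (x i * Y i j * x j + x i * x j * Y j i)"
      by (subst quad_two_point) (auto simp: algebra_simps)
  qed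
  also have "\<dots> = (\<Sum>i<m. \<Sum>j<m. x j * x j * Y i i) + (\<Sum>i<m. \<Sum>j<m. x i * x i * Y j j)
      - ((\<Sum>i<m. \<Sum>j<m. x i * Y i j * x j) + (\<Sum>i<m. \<Sum>j<m. x i * x j * Y j i))"
    by (simp add: sum.distrib sum_subtractf)
  also have "(\<Sum>i<m. \<Sum>j<m. x i * x j * Y j i) = quad m Y x"
    unfolding quad_expand by (subst sum.swap) (simp add: mult_ac)
  also have "(\<Sum>i<m. \<Sum>j<m. x i * Y i j * x j) = quad m Y x"
    unfolding quad_expand ..
  also have "(\<Sum>i<m. \<Sum>j<m. x j * x j * Y i i) = tr m Y * dot m x x"
    by (subst sum.swap) (simp add: tr_def dot_def sum_distrib_left sum_distrib_right mult_ac)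
  also have "(\<Sum>i<m. \<Sum>j<m. x i * x i * Y j j) = tr m Y * dot m x x"
    by (simp add: tr_def dot_def sum_distrib_left sum_distrib_right mult_ac)
  finally show ?thesis by simp
qed

lemma tr_sandwich_nonneg:
  assumes "sym_mat S" "pos_semidef m X"
  shows "0 \<le> tr m (mmul m S (mmul m X S))"
proof -
  have "tr m (mmul m S (mmul m X S)) = (\<Sum>i<m. quad m X (\<lambda>k. S i k))"
    using assms(1) unfolding tr_def mmul_def quad_expand sym_mat_def
    by (simp add: sum_distrib_left mult_ac)
  also have "\<dots> \<ge> 0" using assms(2) by (intro sum_nonneg) (simp add: pos_semidef_def)
  finally show ?thesis by simp
qed

lemma tr_square_pos:
  assumes "0 < m" "sym_mat S" "mmul m S Q = mat_one m"
  shows "0 < tr m (mmul m S S)"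
proof -
  have "\<exists>k<m. S 0 k \<noteq> 0"
  proof (rule ccontr)
    assume "\<not> ?thesis"
    then have "mmul m S Q 0 0 = 0" by (simp add: mmul_def)
    then show False using assms by (simp add: mat_one_def)
  qed
  then obtain k where k: "k < m" "S 0 k \<noteq> 0" by blast
  have "tr m (mmul m S S) = (\<Sum>i<m. \<Sum>k<m. S i k * S i k)"
    using assms(2) unfolding tr_def mmul_def sym_mat_def by simp
  also have "\<dots> > 0"
  proof (rule sum_pos2[of _ 0])
    show "0 < (\<Sum>k<m. S 0 k * S 0 k)"
      by (rule sum_pos2[of _ k]) (use k in \<open>auto simp: zero_less_mult_iff\<close>)
  qed (use assms(1) in \<open>auto intro!: sum_nonneg\<close>)
  finally show ?thesis .
qed

lemma tr_cauchy_schwarz: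
  assumes "mat_on m Mi" "mat_on m Ni" "sym_mat Mi" "pos_semidef m Ni"
  shows "(tr m (mmul m Mi Ni))^2 \<le> tr m Ni * tr m (mmul m Mi (mmul m Ni Mi))"
proof (rule discriminant_le_of_nonneg)
  fix t
  let ?Z = "lcomb 1 (mat_one m) t Mi"
  have "0 \<le> tr m (mmul m ?Z (mmul m Ni ?Z))"
    by (rule tr_sandwich_nonneg) (use assms in auto)
  also have "tr m (mmul m ?Z (mmul m Ni ?Z)) = tr m Ni + t * tr m (mmul m Mi Ni)
     + t * (tr m (mmul m Ni Mi) + t * tr m (mmul m Mi (mmul m Ni Mi)))"
    using assms(1,2)
    by (simp add: mmul_lcomb_left mmul_lcomb_right tr_lcomb mmul_mat_one_right mmul_mat_one_left)
  also have "tr m (mmul m Ni Mi) = tr m (mmul m Mi Ni)" by (rule tr_mmul_commute)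
  finally show "0 \<le> tr m Ni + 2*t*tr m (mmul m Mi Ni) + t^2 * tr m (mmul m Mi (mmul m Ni Mi))"
    by (simp add: algebra_simps power2_eq_square)
  show "0 \<le> tr m (mmul m Mi (mmul m Ni Mi))"
    by (rule tr_sandwich_nonneg) (use assms in auto)
qed

lemma sherman_morrison:
  assumes M: "sym_mat M" "is_inv m M N" "sym_mat N"
    and c: "c = 1 + t * quad m N v" "c \<noteq> 0"
  shows "is_inv m (lcomb 1 M t (outer m v)) (lcomb 1 N (-(t/c)) (outer m (mvec m N v)))"
proof -
  define s where "s = t / c"
  let ?w = "mvec m N v"
  let ?M' = "lcomb 1 M t (outer m v)" and ?N' = "lcomb 1 N (-s) (outer m ?w)"
  have sN: "\<And>a b. N a b = N b a" using M(3) by (simp add: sym_mat_def)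
  have right: "mmul m ?M' ?N' = mat_one m"
  proof (intro ext)
    fix i j
    show "mmul m ?M' ?N' i j = mat_one m i j"
    proof (cases "i < m \<and> j < m")
      case False
      then show ?thesis by (auto simp: mmul_def mat_one_def)
    next
      case True
      then have i: "i < m" and j: "j < m" by auto
      have "mmul m ?M' ?N' i j
          = (\<Sum>k<m. (M i k + t * (v i * v k)) * (N k j - s * (?w k * ?w j)))"
        unfolding mmul_def lcomb_def outer_def using i j by (auto intro!: sum.cong)
      also have "\<dots> = (\<Sum>k<m. M i k * N k j) - s * ?w j * (\<Sum>k<m. M i k * ?w k)
          + t * v i * (\<Sum>k<m. v k * N k j) - t * s * v i * ?w j * (\<Sum>k<m. v k * ?w k)"
        by (simp add: algebra_simps sum.distrib sum_subtractf sum_distrib_left sum_distrib_right)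
      also have "(\<Sum>k<m. M i k * N k j) = mat_one m i j"
        using M(2) i j unfolding is_inv_def by (metis mmul_def)
      also have "(\<Sum>k<m. M i k * ?w k) = v i"
        using mvec_is_inv[OF M(2) i, of v] i by (simp add: mvec_def)
      also have "(\<Sum>k<m. v k * N k j) = ?w j"
        using j by (simp add: mvec_def sN mult.commute)
      also have "(\<Sum>k<m. v k * ?w k) = quad m N v"
        by (simp add: quad_def dot_def)
      finally have "mmul m ?M' ?N' i j = mat_one m i j + v i * ?w j * (t - s * c)"
        using c(1) by (simp add: algebra_simps)
      then show ?thesis using c(2) by (simp add: s_def)
    qed
  qed
  have "mmul m ?N' ?M' i j = mat_one m i j" for i j
    using mmul_sym_mat_swap[of ?M' ?N' m i j] right M(1,3) by (auto simp: mat_one_def)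
  then show ?thesis using right M(2) by (auto simp: is_inv_def s_def)
qed

lemma tr_inv_mat_rank_one_update:
  assumes "mat_on m M" "sym_mat M" "pos_def m (lcomb 1 M t (outer m v))" "pos_def m M"
    and c: "1 + t * quad m (inv_mat m M) v \<noteq> 0"
  shows "tr m (inv_mat m (lcomb 1 M t (outer m v)))
       = tr m (inv_mat m M) - t / (1 + t * quad m (inv_mat m M) v)
           * quad m (mmul m (inv_mat m M) (inv_mat m M)) v"
proof -
  let ?N = "inv_mat m M"
  have N: "is_inv m M ?N" "sym_mat ?N"
    using assms is_inv_inv_mat sym_mat_inv_mat by blast+
  have "inv_mat m (lcomb 1 M t (outer m v))
      = lcomb 1 ?N (-(t / (1 + t * quad m ?N v))) (outer m (mvec m ?N v))"
    using assms(1,3) sherman_morrison[OF assms(2) N(1) N(2) refl c] by (intro inv_mat_eqI) simp_all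
  then show ?thesis by (simp add: tr_lcomb tr_outer quad_mmul_self[OF N(2)])
qed

lemma pos_def_sub_rank_one:
  assumes "mat_on m M" "sym_mat M" "pos_def m M" "0 \<le> t" "t * quad m (inv_mat m M) v < 1"
  shows "pos_def m (lcomb 1 M (-t) (outer m v))"
  unfolding pos_def_def
proof (intro allI impI)
  fix x assume x: "nonzero m x"
  then have pos: "0 < quad m M x" using assms(3) by (simp add: pos_def_def)
  have "t * (dot m v x)^2 \<le> t * (quad m (inv_mat m M) v * quad m M x)"
    using dot_sq_le_quad_inv_mat[OF assms(1-3)] assms(4) by (simp add: mult_left_mono)
  also have "\<dots> < quad m M x" using assms(5) pos by (simp add: mult.assoc[symmetric])
  finally show "0 < quad m (lcomb 1 M (-t) (outer m v)) x" by (simp add: quad_lcomb quad_outer)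
qed

text \<open>Cauchy--Schwarz with the inverse gives |x|^4 \<le> (x^T M x) (x^T M^-1 x), and the
  last factor is at most tr M^-1 |x|^2.\<close>

lemma pos_def_shift:
  assumes "mat_on m M" "sym_mat M" "pos_def m M" "0 < d" "d * tr m (inv_mat m M) < 1"
  shows "pos_def m (lcomb 1 M (-d) (mat_one m))"
  unfolding pos_def_def
proof (intro allI impI)
  fix x assume x: "nonzero m x"
  let ?N = "inv_mat m M"
  have pM: "0 < quad m M x" using assms(3) x by (simp add: pos_def_def)
  have dx: "0 < dot m x x" using x by (rule dot_self_pos)
  have "(dot m x x)^2 \<le> quad m ?N x * quad m M x"
    by (rule dot_sq_le_quad_inv_mat[OF assms(1-3)])
  also have "\<dots> \<le> (tr m ?N * dot m x x) * quad m M x"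
    using quad_le_tr pos_def_inv_mat[OF assms(1,3,2)] pos_def_imp_pos_semidef pM
    by (simp add: mult_right_mono)
  finally have "dot m x x \<le> tr m ?N * quad m M x" using dx by (simp add: power2_eq_square)
  then have "d * dot m x x \<le> (d * tr m ?N) * quad m M x" using assms(4) by (simp add: mult_ac)
  also have "\<dots> < quad m M x" using assms(5) pM by simp
  finally show "0 < quad m (lcomb 1 M (-d) (mat_one m)) x" by (simp add: quad_lcomb quad_mat_one)
qed

lemma resolvent_identities:
  assumes "mat_on m X" "sym_mat X" "pos_def m X" "0 < d"
  defines "Xi \<equiv> inv_mat m X" and "Yi \<equiv> inv_mat m (lcomb 1 X d (mat_one m))"
  shows "Xi = lcomb 1 Yi d (mmul m Xi Yi)" "mmul m Xi Yi = mmul m Yi Xi"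
    "tr m Xi = tr m Yi + d * tr m (mmul m Xi Yi)"
    "tr m (mmul m Xi Yi) = tr m (mmul m Yi Yi) + d * tr m (mmul m Yi (mmul m Xi Yi))"
    "0 \<le> tr m (mmul m Yi (mmul m Xi Yi))"
proof -
  let ?Y = "lcomb 1 X d (mat_one m)"
  have Y: "mat_on m ?Y" "sym_mat ?Y" "pos_def m ?Y"
    using assms pos_def_add_pos_semidef pos_semidef_mat_one by auto
  have iX: "is_inv m X Xi" and iY: "is_inv m ?Y Yi"
    using is_inv_inv_mat assms Y unfolding Xi_def Yi_def by blast+
  have mXi: "mat_on m Xi" and mYi: "mat_on m Yi" using iX iY by (auto simp: is_inv_def)
  have "Xi = mmul m Xi (mmul m ?Y Yi)" using iY mXi by (simp add: is_inv_def mmul_mat_one_right)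
  also have "\<dots> = lcomb 1 (mmul m (mmul m Xi X) Yi) d (mmul m Xi Yi)"
    unfolding mmul_lcomb_left mmul_lcomb_right by (simp add: mmul_assoc mmul_mat_one_left mYi)
  also have "mmul m (mmul m Xi X) Yi = Yi" using iX mYi by (simp add: is_inv_def mmul_mat_one_left)
  finally show left: "Xi = lcomb 1 Yi d (mmul m Xi Yi)" .
  have "Xi = mmul m (mmul m Yi ?Y) Xi" using iY mXi by (simp add: is_inv_def mmul_mat_one_left)
  also have "\<dots> = lcomb 1 (mmul m Yi (mmul m X Xi)) d (mmul m Yi Xi)"
    unfolding mmul_assoc mmul_lcomb_left mmul_lcomb_right by (simp add: mmul_mat_one_left mXi)
  also have "mmul m Yi (mmul m X Xi) = Yi" using iX mYi by (simp add: is_inv_def mmul_mat_one_right)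
  finally have right: "Xi = lcomb 1 Yi d (mmul m Yi Xi)" .
  show "mmul m Xi Yi = mmul m Yi Xi"
  proof (intro ext)
    fix i j
    have "Yi i j + d * mmul m Xi Yi i j = Yi i j + d * mmul m Yi Xi i j"
      using left right by (metis lcomb_def mult_1)
    then show "mmul m Xi Yi i j = mmul m Yi Xi i j" using assms(4) by simp
  qed
  show "tr m Xi = tr m Yi + d * tr m (mmul m Xi Yi)"
    by (subst left) (simp add: tr_lcomb)
  have "tr m (mmul m Xi Yi) = tr m (lcomb 1 (mmul m Yi Yi) d (mmul m (mmul m Xi Yi) Yi))"
    by (subst left) (simp add: mmul_lcomb_left)
  also have "\<dots> = tr m (mmul m Yi Yi) + d * tr m (mmul m Yi (mmul m Xi Yi))"
    by (simp add: tr_lcomb tr_mmul_commute[of m "mmul m Xi Yi"])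
  finally show "tr m (mmul m Xi Yi) = tr m (mmul m Yi Yi) + d * tr m (mmul m Yi (mmul m Xi Yi))" .
  have "sym_mat Yi" using sym_mat_inv_mat Y Yi_def by blast
  moreover have "pos_semidef m Xi"
    using pos_def_inv_mat assms pos_def_imp_pos_semidef unfolding Xi_def by blast
  ultimately show "0 \<le> tr m (mmul m Yi (mmul m Xi Yi))" by (rule tr_sandwich_nonneg)
qed

section \<open>Barrier potentials\<close>

text \<open>The potentials and scores of Batson, Spielman and Srivastava: upper_pot and lower_pot are
  tr (u I - A)^-1 and tr (A - l I)^-1, and upper_score and lower_score are their U_A(v) and
  L_A(v) for the step from the barriers (l, u) to (l + dL, u + dU).\<close>

definition upper_gap :: "nat \<Rightarrow> rmat \<Rightarrow> real \<Rightarrow> rmat" where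
  "upper_gap m A u = lcomb u (mat_one m) (-1) A"

definition lower_gap :: "nat \<Rightarrow> rmat \<Rightarrow> real \<Rightarrow> rmat" where
  "lower_gap m A l = lcomb 1 A (-l) (mat_one m)"

definition upper_pot :: "nat \<Rightarrow> rmat \<Rightarrow> real \<Rightarrow> real" where
  "upper_pot m A u = tr m (inv_mat m (upper_gap m A u))"

definition lower_pot :: "nat \<Rightarrow> rmat \<Rightarrow> real \<Rightarrow> real" where
  "lower_pot m A l = tr m (inv_mat m (lower_gap m A l))"

definition upper_score :: "nat \<Rightarrow> rmat \<Rightarrow> real \<Rightarrow> real \<Rightarrow> rvec \<Rightarrow> real" where
  "upper_score m A u dU v = (let Yi = inv_mat m (upper_gap m A (u + dU)) in
     quad m (mmul m Yi Yi) v / (upper_pot m A u - upper_pot m A (u + dU)) + quad m Yi v)"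

definition lower_score :: "nat \<Rightarrow> rmat \<Rightarrow> real \<Rightarrow> real \<Rightarrow> rvec \<Rightarrow> real" where
  "lower_score m A l dL v = (let Mi = inv_mat m (lower_gap m A (l + dL)) in
     quad m (mmul m Mi Mi) v / (lower_pot m A (l + dL) - lower_pot m A l) - quad m Mi v)"

definition barrier :: "nat \<Rightarrow> rmat \<Rightarrow> real \<Rightarrow> real \<Rightarrow> real \<Rightarrow> real \<Rightarrow> bool" where
  "barrier m A l u eL eU \<longleftrightarrow> mat_on m A \<and> sym_mat A
     \<and> pos_def m (upper_gap m A u) \<and> pos_def m (lower_gap m A l)
     \<and> upper_pot m A u \<le> eU \<and> lower_pot m A l \<le> eL"

definition isotropic :: "nat \<Rightarrow> 'e set \<Rightarrow> ('e \<Rightarrow> rvec) \<Rightarrow> bool" where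
  "isotropic m I v \<longleftrightarrow> (\<forall>k<m. \<forall>l<m. (\<Sum>e\<in>I. v e k * v e l) = (if k = l then 1 else 0))"

lemma mat_on_upper_gap [simp]: "mat_on m A \<Longrightarrow> mat_on m (upper_gap m A u)"
  by (simp add: upper_gap_def)

lemma mat_on_lower_gap [simp]: "mat_on m A \<Longrightarrow> mat_on m (lower_gap m A l)"
  by (simp add: lower_gap_def)

lemma sym_mat_upper_gap [simp]: "sym_mat A \<Longrightarrow> sym_mat (upper_gap m A u)"
  by (simp add: upper_gap_def)

lemma sym_mat_lower_gap [simp]: "sym_mat A \<Longrightarrow> sym_mat (lower_gap m A l)"
  by (simp add: lower_gap_def)

lemma upper_gap_shift: "upper_gap m A (u + d) = lcomb 1 (upper_gap m A u) d (mat_one m)"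
  by (intro ext) (simp add: upper_gap_def lcomb_def algebra_simps)

lemma lower_gap_shift: "lower_gap m A l = lcomb 1 (lower_gap m A (l + d)) d (mat_one m)"
  by (intro ext) (simp add: lower_gap_def lcomb_def algebra_simps)

lemma lower_gap_shift': "lower_gap m A (l + d) = lcomb 1 (lower_gap m A l) (-d) (mat_one m)"
  by (intro ext) (simp add: lower_gap_def lcomb_def algebra_simps)

lemma upper_gap_update: "upper_gap m (lcomb 1 A t B) u = lcomb 1 (upper_gap m A u) (-t) B"
  by (intro ext) (simp add: upper_gap_def lcomb_def algebra_simps)

lemma lower_gap_update: "lower_gap m (lcomb 1 A t B) l = lcomb 1 (lower_gap m A l) t B"
  by (intro ext) (simp add: lower_gap_def lcomb_def algebra_simps)

lemma isotropic_sum_quad: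
  assumes "finite I" "isotropic m I v"
  shows "(\<Sum>e\<in>I. quad m X (v e)) = tr m X"
proof -
  have "(\<Sum>e\<in>I. quad m X (v e)) = (\<Sum>k<m. \<Sum>l<m. X k l * (\<Sum>e\<in>I. v e k * v e l))"
    unfolding quad_expand sum_distrib_left
    by (subst sum.swap, rule sum.cong[OF refl], subst sum.swap) (simp add: mult_ac)
  also have "\<dots> = tr m X"
    using assms(2) unfolding isotropic_def tr_def
    by (simp add: delta_mult_simps cong: if_cong)
  finally show ?thesis .
qed

lemma tr_square_nonneg: "mat_on m S \<Longrightarrow> sym_mat S \<Longrightarrow> 0 \<le> tr m (mmul m S S)"
  using tr_sandwich_nonneg[of S m "mat_one m"] pos_semidef_mat_one by (simp add: mmul_mat_one_left)

lemma upper_pot_gap: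
  assumes A: "mat_on m A" "sym_mat A" and pos: "pos_def m (upper_gap m A u)" and "0 < dU"
  defines "Yi \<equiv> inv_mat m (upper_gap m A (u + dU))"
  shows "dU * tr m (mmul m Yi Yi) \<le> upper_pot m A u - upper_pot m A (u + dU)"
proof -
  note R = resolvent_identities[OF _ _ pos \<open>0 < dU\<close>, folded upper_gap_shift Yi_def]
  have "dU * tr m (mmul m Yi Yi) \<le> dU * tr m (mmul m (inv_mat m (upper_gap m A u)) Yi)"
    using R(4,5) A \<open>0 < dU\<close> by simp
  then show ?thesis using R(3) A by (simp add: upper_pot_def Yi_def)
qed

lemma upper_score_sum:
  assumes "finite I" "isotropic m I v" and A: "mat_on m A" "sym_mat A"
    and pos: "pos_def m (upper_gap m A u)" and dU: "0 < dU"
  shows "(\<Sum>e\<in>I. upper_score m A u dU (v e)) \<le> 1 / dU + upper_pot m A u"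
proof -
  define Yi where "Yi = inv_mat m (upper_gap m A (u + dU))"
  define D where "D = upper_pot m A u - upper_pot m A (u + dU)"
  have Y: "mat_on m (upper_gap m A (u + dU))" "pos_def m (upper_gap m A (u + dU))"
    using A pos dU by (auto simp: upper_gap_shift intro: pos_def_add_pos_semidef pos_semidef_mat_one)
  have gap: "dU * tr m (mmul m Yi Yi) \<le> D"
    using upper_pot_gap[OF A pos dU] by (simp add: Yi_def D_def)
  have YY: "0 \<le> tr m (mmul m Yi Yi)"
    using Y A mat_on_inv_mat sym_mat_inv_mat tr_square_nonneg by (simp add: Yi_def)
  have "(\<Sum>e\<in>I. upper_score m A u dU (v e)) = tr m (mmul m Yi Yi) / D + tr m Yi"
    using assms(1,2)
    by (simp add: upper_score_def Let_def sum.distrib isotropic_sum_quad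
        sum_divide_distrib[symmetric] Yi_def D_def)
  also have "tr m (mmul m Yi Yi) / D \<le> 1 / dU"
  proof (cases "D = 0")
    case False
    then have "0 < D" using gap dU YY by (smt (verit) mult_nonneg_nonneg)
    then show ?thesis using gap dU by (simp add: field_simps mult.commute)
  qed (use dU in simp)
  also have "tr m Yi \<le> upper_pot m A u"
    using gap YY dU by (simp add: D_def Yi_def upper_pot_def) (smt (verit) mult_nonneg_nonneg)
  finally show ?thesis by simp
qed

lemma upper_score_pos_iff:
  assumes A: "mat_on m A" "sym_mat A" and pos: "pos_def m (upper_gap m A u)" and dU: "0 < dU"
  shows "0 < upper_score m A u dU v \<longleftrightarrow> nonzero m v"
proof -
  define Yi where "Yi = inv_mat m (upper_gap m A (u + dU))"
  have Y: "mat_on m (upper_gap m A (u + dU))" "pos_def m (upper_gap m A (u + dU))"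
    using A pos dU by (auto simp: upper_gap_shift intro: pos_def_add_pos_semidef pos_semidef_mat_one)
  have sYi: "sym_mat Yi" and pYi: "pos_def m Yi"
    using Y A sym_mat_inv_mat pos_def_inv_mat by (simp_all add: Yi_def)
  have "0 \<le> upper_pot m A u - upper_pot m A (u + dU)"
    using upper_pot_gap[OF A pos dU] tr_square_nonneg[of m Yi] Y A mat_on_inv_mat sYi dU
    by (simp add: Yi_def) (smt (verit) mult_nonneg_nonneg)
  then have "0 \<le> quad m (mmul m Yi Yi) v / (upper_pot m A u - upper_pot m A (u + dU))"
    by (simp add: quad_mmul_self[OF sYi] dot_self_nonneg)
  moreover have "upper_score m A u dU v = quad m (mmul m Yi Yi) v
      / (upper_pot m A u - upper_pot m A (u + dU)) + quad m Yi v"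
    by (simp add: upper_score_def Let_def Yi_def)
  moreover have "0 < quad m Yi v \<longleftrightarrow> nonzero m v"
    using pYi quad_not_nonzero[of m v Yi] unfolding pos_def_def by (metis less_irrefl)
  moreover have "\<not> nonzero m v \<Longrightarrow> quad m (mmul m Yi Yi) v = 0"
    by (rule quad_not_nonzero)
  ultimately show ?thesis by auto
qed

lemma upper_score_not_nonzero: "\<not> nonzero m v \<Longrightarrow> upper_score m A u dU v = 0"
  by (simp add: upper_score_def Let_def quad_not_nonzero)

lemma upper_barrier_update:
  assumes A: "mat_on m A" "sym_mat A" and pos: "pos_def m (upper_gap m A u)" and dU: "0 < dU"
    and v: "nonzero m v" and t: "0 < t" and score: "upper_score m A u dU v \<le> 1 / t"
  shows "pos_def m (upper_gap m (lcomb 1 A t (outer m v)) (u + dU))"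
    and "upper_pot m (lcomb 1 A t (outer m v)) (u + dU) \<le> upper_pot m A u"
proof -
  define Y where "Y = upper_gap m A (u + dU)"
  define Yi where "Yi = inv_mat m Y"
  define D where "D = upper_pot m A u - upper_pot m A (u + dU)"
  define p where "p = quad m (mmul m Yi Yi) v"
  define q where "q = quad m Yi v"
  have Y: "mat_on m Y" "sym_mat Y" "pos_def m Y"
    using A pos dU by (auto simp: Y_def upper_gap_shift intro: pos_def_add_pos_semidef pos_semidef_mat_one)
  have Yi: "mat_on m Yi" "sym_mat Yi" "pos_def m Yi" "is_inv m Y Yi"
    using Y mat_on_inv_mat sym_mat_inv_mat pos_def_inv_mat is_inv_inv_mat by (simp_all add: Yi_def)
  have "0 < m" using v by (auto simp: nonzero_def)
  then have "0 < tr m (mmul m Yi Yi)"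
    using tr_square_pos[OF _ Yi(2), where Q = Y] Yi(4) by (simp add: is_inv_def)
  then have D: "0 < D"
    using upper_pot_gap[OF A pos dU] dU by (simp add: D_def Y_def Yi_def) (smt (verit) mult_pos_pos)
  have p: "0 < p"
    unfolding p_def quad_mmul_self[OF Yi(2)] by (rule dot_self_pos[OF pos_def_mvec_nonzero[OF Yi(3) v]])
  have score': "p / D + q \<le> 1 / t"
    using score by (simp add: upper_score_def Let_def p_def q_def D_def Yi_def Y_def)
  have "q < 1 / t" using score' p D by (smt (verit) divide_pos_pos)
  then have tq: "t * q < 1" using t by (simp add: field_simps)
  have gap: "upper_gap m (lcomb 1 A t (outer m v)) (u + dU) = lcomb 1 Y (-t) (outer m v)"
    by (simp add: Y_def upper_gap_update)
  show posY': "pos_def m (upper_gap m (lcomb 1 A t (outer m v)) (u + dU))"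
    unfolding gap using pos_def_sub_rank_one[OF Y] t tq by (simp add: Yi_def q_def)
  have "upper_pot m (lcomb 1 A t (outer m v)) (u + dU) = tr m Yi + t / (1 - t * q) * p"
    using tr_inv_mat_rank_one_update[OF Y(1,2), of "-t" v] posY' Y(3) tq
    by (simp add: upper_pot_def gap Yi_def q_def p_def)
  also have "t / (1 - t * q) * p \<le> D"
  proof -
    have "p \<le> D * (1 / t - q)" using score' D by (simp add: field_simps)
    then show ?thesis using t tq by (simp add: field_simps)
  qed
  finally show "upper_pot m (lcomb 1 A t (outer m v)) (u + dU) \<le> upper_pot m A u"
    by (simp add: D_def upper_pot_def Yi_def Y_def)
qed

lemma pos_def_lower_gap_shift:
  assumes A: "mat_on m A" "sym_mat A" and pos: "pos_def m (lower_gap m A l)"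
    and dL: "0 < dL" and small: "dL * lower_pot m A l < 1"
  shows "pos_def m (lower_gap m A (l + dL))"
  unfolding lower_gap_shift'
  using pos_def_shift[of m "lower_gap m A l" dL] A pos dL small by (simp add: lower_pot_def)

lemma lower_pot_gap:
  assumes A: "mat_on m A" "sym_mat A" and pos: "pos_def m (lower_gap m A (l + dL))"
    and dL: "0 < dL"
  defines "Mi \<equiv> inv_mat m (lower_gap m A (l + dL))" and "Ni \<equiv> inv_mat m (lower_gap m A l)"
  shows "lower_pot m A (l + dL) - lower_pot m A l = dL * tr m (mmul m Mi Ni)"
    and "tr m (mmul m Ni Ni) \<le> tr m (mmul m Mi Ni)"
proof -
  note R = resolvent_identities[OF mat_on_lower_gap[OF A(1)] sym_mat_lower_gap[OF A(2)] pos dL,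
      unfolded lower_gap_shift[of m A l dL, symmetric], folded Mi_def Ni_def]
  show "lower_pot m A (l + dL) - lower_pot m A l = dL * tr m (mmul m Mi Ni)"
    using R(3) by (simp add: lower_pot_def Mi_def Ni_def)
  show "tr m (mmul m Ni Ni) \<le> tr m (mmul m Mi Ni)"
    using R(4,5) dL by simp
qed

lemma lower_score_sum:
  assumes "0 < m" "finite I" "isotropic m I v" and A: "mat_on m A" "sym_mat A"
    and pos: "pos_def m (lower_gap m A l)" and dL: "0 < dL" and small: "dL * lower_pot m A l < 1"
  shows "1 / dL - lower_pot m A l \<le> (\<Sum>e\<in>I. lower_score m A l dL (v e))"
proof -
  define Mi where "Mi = inv_mat m (lower_gap m A (l + dL))"
  define Ni where "Ni = inv_mat m (lower_gap m A l)"
  define T where "T = tr m (mmul m Mi Ni)"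
  define RR where "RR = tr m (mmul m Mi (mmul m Ni Mi))"
  have posM: "pos_def m (lower_gap m A (l + dL))"
    by (rule pos_def_lower_gap_shift[OF A pos dL small])
  note R = resolvent_identities[OF mat_on_lower_gap[OF A(1)] sym_mat_lower_gap[OF A(2)] posM dL,
      unfolded lower_gap_shift[of m A l dL, symmetric], folded Mi_def Ni_def]
  have Mi: "mat_on m Mi" "sym_mat Mi" and Ni: "mat_on m Ni" "sym_mat Ni" "pos_def m Ni"
    using A pos posM mat_on_inv_mat sym_mat_inv_mat pos_def_inv_mat
    by (simp_all add: Mi_def Ni_def)
  have Dl: "lower_pot m A (l + dL) - lower_pot m A l = dL * T"
    using lower_pot_gap(1)[OF A posM dL] by (simp add: T_def Mi_def Ni_def)
  have "0 < tr m (mmul m Ni Ni)"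
    using tr_square_pos[OF \<open>0 < m\<close> Ni(2), where Q = "lower_gap m A l"] is_inv_inv_mat A pos
    by (simp add: Ni_def is_inv_def)
  then have T: "0 < T"
    using lower_pot_gap(2)[OF A posM dL] by (simp add: T_def Mi_def Ni_def)
  have "mmul m Mi Mi = mmul m Mi (lcomb 1 Ni dL (mmul m Mi Ni))"
    using R(1) by (rule arg_cong)
  also have "\<dots> = lcomb 1 (mmul m Mi Ni) dL (mmul m Mi (mmul m Ni Mi))"
    using R(2) by (simp add: mmul_lcomb_right)
  finally have MiMi: "tr m (mmul m Mi Mi) = T + dL * RR" by (simp add: tr_lcomb T_def RR_def)
  have RR: "0 \<le> RR"
    unfolding RR_def by (rule tr_sandwich_nonneg[OF Mi(2) pos_def_imp_pos_semidef[OF Ni(3)]])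
  have "T^2 \<le> tr m Ni * RR"
    unfolding T_def RR_def by (rule tr_cauchy_schwarz[OF Mi(1) Ni(1) Mi(2) pos_def_imp_pos_semidef[OF Ni(3)]])
  then have "dL * T^2 \<le> (dL * tr m Ni) * RR" using dL by (simp add: mult.assoc)
  also have "\<dots> \<le> 1 * RR"
    using small RR by (intro mult_right_mono) (simp_all add: lower_pot_def Ni_def)
  finally have RRT: "dL * T \<le> RR / T" using T by (simp add: field_simps power2_eq_square)
  have trMi: "tr m Mi = tr m Ni + dL * T"
    using Dl by (simp add: lower_pot_def Mi_def Ni_def)
  have "(\<Sum>e\<in>I. lower_score m A l dL (v e)) = tr m (mmul m Mi Mi) / (dL * T) - tr m Mi"
    using assms(2,3) Dl
    by (simp add: lower_score_def Let_def sum_subtractf isotropic_sum_quad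
        sum_divide_distrib[symmetric] Mi_def)
  also have "\<dots> = 1 / dL + (RR / T - dL * T) - tr m Ni"
    unfolding MiMi trMi using T dL by (simp add: field_simps)
  finally show ?thesis using RRT by (simp add: lower_pot_def Ni_def)
qed

lemma lower_score_not_nonzero: "\<not> nonzero m v \<Longrightarrow> lower_score m A l dL v = 0"
  by (simp add: lower_score_def Let_def quad_not_nonzero)

lemma lower_barrier_update:
  assumes A: "mat_on m A" "sym_mat A" and pos: "pos_def m (lower_gap m A l)"
    and dL: "0 < dL" and small: "dL * lower_pot m A l < 1"
    and t: "0 < t" and score: "1 / t \<le> lower_score m A l dL v"
  shows "pos_def m (lower_gap m (lcomb 1 A t (outer m v)) (l + dL))"
    and "lower_pot m (lcomb 1 A t (outer m v)) (l + dL) \<le> lower_pot m A l"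
proof -
  define M where "M = lower_gap m A (l + dL)"
  define Mi where "Mi = inv_mat m M"
  define Dl where "Dl = lower_pot m A (l + dL) - lower_pot m A l"
  define p where "p = quad m (mmul m Mi Mi) v"
  define q where "q = quad m Mi v"
  have posM: "pos_def m M"
    unfolding M_def by (rule pos_def_lower_gap_shift[OF A pos dL small])
  have M: "mat_on m M" "sym_mat M" using A by (simp_all add: M_def)
  have q: "0 \<le> q"
    using pos_def_inv_mat[OF M(1) posM M(2)] pos_def_imp_pos_semidef
    by (simp add: q_def Mi_def pos_semidef_def)
  have "0 \<le> tr m (mmul m (inv_mat m (lower_gap m A l)) (inv_mat m (lower_gap m A l)))"
    using A pos by (intro tr_square_nonneg mat_on_inv_mat sym_mat_inv_mat) simp_all
  then have "0 \<le> Dl"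
    using lower_pot_gap[OF A posM[unfolded M_def] dL] dL by (simp add: Dl_def)
  moreover have score': "1 / t \<le> p / Dl - q"
    using score by (simp add: lower_score_def Let_def p_def q_def Dl_def Mi_def M_def)
  moreover have "0 < 1 / t" using t by simp
  ultimately have Dl: "0 < Dl" using q by (cases "Dl = 0") auto
  have gap: "lower_gap m (lcomb 1 A t (outer m v)) (l + dL) = lcomb 1 M t (outer m v)"
    by (simp add: M_def lower_gap_update)
  show posM': "pos_def m (lower_gap m (lcomb 1 A t (outer m v)) (l + dL))"
    unfolding gap using pos_def_add_pos_semidef[OF posM pos_semidef_outer] t by simp
  have c: "0 < 1 + t * q" using t q by (smt (verit) mult_nonneg_nonneg)
  then have "lower_pot m (lcomb 1 A t (outer m v)) (l + dL) = tr m Mi - t / (1 + t * q) * p"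
    using tr_inv_mat_rank_one_update[OF M, of t v] posM' posM
    by (simp add: lower_pot_def gap Mi_def q_def p_def)
  also have "\<dots> \<le> tr m Mi - Dl"
  proof -
    have "(1 / t + q) * Dl \<le> p" using score' Dl by (simp add: field_simps)
    then show ?thesis using t c by (simp add: field_simps)
  qed
  finally show "lower_pot m (lcomb 1 A t (outer m v)) (l + dL) \<le> lower_pot m A l"
    by (simp add: Dl_def lower_pot_def Mi_def M_def)
qed

lemma exists_pos_le_of_sum_le:
  fixes U L :: "'e \<Rightarrow> real"
  assumes "finite I" and U: "\<And>e. e \<in> I \<Longrightarrow> 0 \<le> U e"
    and L: "\<And>e. e \<in> I \<Longrightarrow> U e = 0 \<Longrightarrow> L e \<le> 0"
    and le: "sum U I \<le> sum L I" and pos: "0 < sum L I"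
  shows "\<exists>e\<in>I. 0 < U e \<and> U e \<le> L e"
proof (rule ccontr)
  assume none: "\<not> ?thesis"
  have LU: "L e \<le> U e" if "e \<in> I" for e
    using U[OF that] L[OF that] none that by force
  obtain e where e: "e \<in> I" "0 < L e" using pos by (metis not_le sum_nonpos)
  then have "L e < U e" using U L none by force
  then have "sum L I < sum U I" using sum_strict_mono_ex1[OF assms(1)] LU e(1) by blast
  then show False using le by simp
qed

lemma barrier_step:
  assumes "0 < m" "finite I" "isotropic m I v" and bar: "barrier m A l u eL eU"
    and dL: "0 < dL" and dU: "0 < dU" and eL: "dL * eL < 1" and gap: "1 / dU + eU \<le> 1 / dL - eL"
  shows "\<exists>e\<in>I. \<exists>t>0. barrier m (lcomb 1 A t (outer m (v e))) (l + dL) (u + dU) eL eU"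
proof -
  have A: "mat_on m A" "sym_mat A" and pu: "pos_def m (upper_gap m A u)"
    and pl: "pos_def m (lower_gap m A l)"
    and Uu: "upper_pot m A u \<le> eU" and Ll: "lower_pot m A l \<le> eL"
    using bar by (simp_all add: barrier_def)
  have small: "dL * lower_pot m A l < 1"
    using Ll dL eL by (smt (verit) mult_left_mono)
  let ?U = "\<lambda>e. upper_score m A u dU (v e)" and ?L = "\<lambda>e. lower_score m A l dL (v e)"
  have "sum ?U I \<le> 1 / dU + eU" using upper_score_sum[OF assms(2,3) A pu dU] Uu by simp
  also have "\<dots> \<le> 1 / dL - eL" by (rule gap)
  also have "\<dots> \<le> sum ?L I" using lower_score_sum[OF assms(1-3) A pl dL small] Ll by simp
  finally have "sum ?U I \<le> sum ?L I" .
  moreover have "0 < 1 / dL - eL" using eL dL by (simp add: field_simps)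
  then have "0 < sum ?L I" using lower_score_sum[OF assms(1-3) A pl dL small] Ll by simp
  moreover have "0 \<le> ?U e" for e
    using upper_score_pos_iff[OF A pu dU, of "v e"] upper_score_not_nonzero[of m "v e"]
    by (cases "nonzero m (v e)") auto
  moreover have "?L e \<le> 0" if "?U e = 0" for e
    using that upper_score_pos_iff[OF A pu dU, of "v e"] lower_score_not_nonzero by auto
  ultimately obtain e where e: "e \<in> I" "0 < ?U e" "?U e \<le> ?L e"
    using exists_pos_le_of_sum_le[OF assms(2), of ?U ?L] by blast
  define t where "t = 1 / ?U e"
  have t: "0 < t" "1 / t = ?U e" using e(2) by (simp_all add: t_def)
  have v: "nonzero m (v e)" using e(2) upper_score_pos_iff[OF A pu dU] by blast
  have "?U e \<le> 1 / t" "1 / t \<le> ?L e" using t(2) e(3) by simp_all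
  note up = upper_barrier_update[OF A pu dU v t(1) this(1)]
    and low = lower_barrier_update[OF A pl dL small t(1) this(2)]
  have "barrier m (lcomb 1 A t (outer m (v e))) (l + dL) (u + dU) eL eU"
    unfolding barrier_def using A up low Uu Ll by auto
  then show ?thesis using e(1) t(1) by blast
qed

section \<open>Spectral sparsification\<close>

definition outer_sum :: "nat \<Rightarrow> 'e set \<Rightarrow> ('e \<Rightarrow> real) \<Rightarrow> ('e \<Rightarrow> rvec) \<Rightarrow> rmat" where
  "outer_sum m I s v = (\<lambda>i j. \<Sum>e\<in>I. s e * outer m (v e) i j)"

lemma quad_outer_sum: "quad m (outer_sum m I s v) z = (\<Sum>e\<in>I. s e * (dot m (v e) z)^2)"
  by (simp add: outer_sum_def quad_sum quad_scale quad_outer)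

lemma outer_sum_update:
  assumes "finite I" "e \<in> I"
  shows "outer_sum m I (s(e := s e + t)) v = lcomb 1 (outer_sum m I s v) t (outer m (v e))"
proof (intro ext)
  fix i j
  have "(\<Sum>e'\<in>I. (s(e := s e + t)) e' * outer m (v e') i j)
      = (\<Sum>e'\<in>I. s e' * outer m (v e') i j + (if e' = e then t * outer m (v e') i j else 0))"
    by (intro sum.cong refl) (auto simp: algebra_simps)
  then show "outer_sum m I (s(e := s e + t)) v i j = lcomb 1 (outer_sum m I s v) t (outer m (v e)) i j"
    using assms by (simp add: outer_sum_def lcomb_def sum.distrib)
qed

lemma barrier_zero:
  assumes "0 < u" "0 < -l"
  shows "barrier m (\<lambda>i j. 0) l u (real m / (-l)) (real m / u)"
proof -
  have U: "upper_gap m (\<lambda>i j. 0) u = (\<lambda>i j. u * mat_one m i j)"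
    and L: "lower_gap m (\<lambda>i j. 0) l = (\<lambda>i j. (-l) * mat_one m i j)"
    by (simp_all add: upper_gap_def lower_gap_def lcomb_def)
  have "upper_pot m (\<lambda>i j. 0) u = real m / u" "lower_pot m (\<lambda>i j. 0) l = real m / (-l)"
    unfolding upper_pot_def lower_pot_def U L inv_mat_scaled_one[OF assms(1)]
      inv_mat_scaled_one[OF assms(2)] tr_scaled_one by simp_all
  then show ?thesis
    unfolding barrier_def U L
    using pos_def_scaled_one[OF assms(1)] pos_def_scaled_one[OF assms(2)]
    by (simp add: mat_on_def sym_mat_def)
qed

lemma barrier_iterate:
  assumes "0 < m" "finite I" "isotropic m I v"
    and dL: "0 < dL" and dU: "0 < dU" and "dL * eL < 1" and "1 / dU + eU \<le> 1 / dL - eL"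
    and start: "barrier m (\<lambda>i j. 0) l u eL eU"
  shows "\<exists>s. (\<forall>e. 0 \<le> s e) \<and> card {e\<in>I. s e \<noteq> 0} \<le> k \<and>
     barrier m (outer_sum m I s v) (l + real k * dL) (u + real k * dU) eL eU"
proof (induction k)
  case 0
  have "outer_sum m I (\<lambda>_. 0) v = (\<lambda>i j. 0)" by (simp add: outer_sum_def)
  then show ?case using start by (intro exI[of _ "\<lambda>_. 0"]) simp
next
  case (Suc k)
  then obtain s where s: "\<forall>e. 0 \<le> s e" "card {e\<in>I. s e \<noteq> 0} \<le> k"
    "barrier m (outer_sum m I s v) (l + real k * dL) (u + real k * dU) eL eU"
    by blast
  obtain e t where e: "e \<in> I" "0 < t"
    "barrier m (lcomb 1 (outer_sum m I s v) t (outer m (v e)))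
        (l + real k * dL + dL) (u + real k * dU + dU) eL eU"
    using barrier_step[OF assms(1-3) s(3) dL dU assms(6,7)] by blast
  let ?s = "s(e := s e + t)"
  have "{e'\<in>I. ?s e' \<noteq> 0} \<subseteq> insert e {e'\<in>I. s e' \<noteq> 0}" by auto
  then have "card {e'\<in>I. ?s e' \<noteq> 0} \<le> card (insert e {e'\<in>I. s e' \<noteq> 0})"
    using assms(2) by (intro card_mono) auto
  also have "\<dots> \<le> Suc k" using assms(2) s(2) by (simp add: card_insert_if)
  finally have "card {e'\<in>I. ?s e' \<noteq> 0} \<le> Suc k" .
  moreover have "\<forall>e'. 0 \<le> ?s e'" using s(1) e(2) by simp
  moreover have "barrier m (outer_sum m I ?s v) (l + real (Suc k) * dL) (u + real (Suc k) * dU) eL eU"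
    unfolding outer_sum_update[OF assms(2) e(1)] using e(3) by (simp add: algebra_simps)
  ultimately show ?case by blast
qed

lemma lower_bound_of_pos_def_lower_gap:
  "pos_def m (lower_gap m A l) \<Longrightarrow> l * dot m z z \<le> quad m A z"
  unfolding pos_def_def lower_gap_def
  by (cases "nonzero m z") (auto simp: quad_lcomb quad_mat_one quad_not_nonzero dot_not_nonzero
      intro: less_imp_le)

lemma upper_bound_of_pos_def_upper_gap:
  "pos_def m (upper_gap m A u) \<Longrightarrow> quad m A z \<le> u * dot m z z"
  unfolding pos_def_def upper_gap_def
  by (cases "nonzero m z") (auto simp: quad_lcomb quad_mat_one quad_not_nonzero dot_not_nonzero
      intro: less_imp_le)

text \<open>The parameters of Batson, Spielman and Srivastava: r^2 m steps with dL = 1 and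
  dU = (r + 1) / (r - 1), starting from l = -r m and u = r m dU.\<close>

theorem bss_sparsification:
  assumes "finite I" "isotropic m I v" "2 \<le> r"
  defines "a \<equiv> (real r + 1) / (real r - 1)" and "b \<equiv> real m * real r * (real r - 1)"
  shows "\<exists>s. (\<forall>e. 0 \<le> s e) \<and> card {e\<in>I. s e \<noteq> 0} \<le> r^2 * m \<and>
     (\<forall>z. b * dot m z z \<le> (\<Sum>e\<in>I. s e * (dot m (v e) z)^2)
        \<and> (\<Sum>e\<in>I. s e * (dot m (v e) z)^2) \<le> b * a^2 * dot m z z)"
proof (cases "m = 0")
  case True
  then show ?thesis by (intro exI[of _ "\<lambda>_. 0"]) (simp add: dot_def)
next
  case False
  have r: "2 \<le> real r" using assms(3) by simp
  have a: "0 < a" using r by (simp add: a_def)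
  define l where "l = - (real m * r)"
  define u where "u = real m * (r * a)"
  have "barrier m (\<lambda>i j. 0) l u (1 / r) (1 / (r * a))"
    using barrier_zero[of u l m] False r a by (simp add: l_def u_def field_simps)
  moreover have "1 / a + 1 / (r * a) \<le> 1 / 1 - 1 / r"
    using r by (simp add: a_def divide_simps) (simp add: algebra_simps)
  ultimately obtain s where s: "\<forall>e. 0 \<le> s e" "card {e\<in>I. s e \<noteq> 0} \<le> r^2 * m"
    "barrier m (outer_sum m I s v) (l + real (r^2 * m) * 1) (u + real (r^2 * m) * a) (1 / r) (1 / (r * a))"
    using barrier_iterate[OF _ assms(1,2), of 1 a "1 / r" "1 / (r * a)" l u "r^2 * m"] False r a
    by auto
  have "l + real (r^2 * m) * 1 = b"
    by (simp add: l_def b_def algebra_simps power2_eq_square)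
  moreover have "u + real (r^2 * m) * a = b * a^2"
  proof -
    have "0 < real r - 1" "0 < real r + 1" using r by simp_all
    then show ?thesis by (simp add: u_def b_def a_def field_simps power2_eq_square)
  qed
  ultimately have "pos_def m (lower_gap m (outer_sum m I s v) b)"
    "pos_def m (upper_gap m (outer_sum m I s v) (b * a^2))"
    using s(3) by (simp_all add: barrier_def)
  then have "b * dot m z z \<le> quad m (outer_sum m I s v) z"
    "quad m (outer_sum m I s v) z \<le> b * a^2 * dot m z z" for z
    using lower_bound_of_pos_def_lower_gap upper_bound_of_pos_def_upper_gap by blast+
  then show ?thesis using s(1,2) unfolding quad_outer_sum by blast
qed

lemma bss_parameter_exists:
  assumes eps: "0 < eps" "eps < 1"
  shows "\<exists>r::nat. 2 \<le> r \<and> real r \<le> 6 / eps \<and> (1 - eps) * ((real r + 1) / (real r - 1))^2 \<le> 1 + eps"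
proof -
  define r where "r = nat \<lceil>4 / eps\<rceil> + 1"
  have "0 < 4 / eps" using eps by simp
  then have rc: "real r = real_of_int \<lceil>4 / eps\<rceil> + 1" by (simp add: r_def)
  have r4: "4 / eps \<le> real r - 1" unfolding rc by simp
  have "real r \<le> 4 / eps + 2" unfolding rc by linarith
  also have "\<dots> \<le> 6 / eps" using eps by (simp add: field_simps)
  finally have r6: "real r \<le> 6 / eps" .
  have "4 < 4 / eps" using eps by (simp add: field_simps)
  then have r2: "2 \<le> r" using r4 by linarith
  define a where "a = (real r + 1) / (real r - 1)"
  have a: "a = 1 + 2 / (real r - 1)" using r2 by (simp add: a_def field_simps)
  have "0 < (real r - 1) * (4 / eps)" using r4 \<open>0 < 4 / eps\<close> by (intro mult_pos_pos) linarith+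
  then have "2 / (real r - 1) \<le> 2 / (4 / eps)"
    using r4 by (intro divide_left_mono) auto
  then have "a \<le> 1 + eps / 2" unfolding a by simp
  moreover have "1 \<le> a" using r2 by (simp add: a_def)
  ultimately have "(1 - eps) * a^2 \<le> (1 - eps) * (1 + eps / 2)^2"
    using eps by (intro mult_left_mono power_mono) auto
  also have "\<dots> = 1 - eps^2 * (3 + eps) / 4"
    by (simp add: field_simps power2_eq_square)
  also have "\<dots> \<le> 1 + eps"
    using eps zero_le_power2[of eps] by (smt (verit) divide_nonneg_pos mult_nonneg_nonneg)
  finally show ?thesis using r2 r6 by (auto simp: a_def)
qed

theorem spectral_sparsification:
  assumes "finite I" "isotropic m I v" and eps: "0 < eps" "eps < 1"
  shows "\<exists>s. (\<forall>e. 0 \<le> s e) \<and> real (card {e\<in>I. s e \<noteq> 0}) \<le> 36 * real m / eps^2 \<and>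
     (\<forall>z. (1 - eps) * dot m z z \<le> (\<Sum>e\<in>I. s e * (dot m (v e) z)^2)
        \<and> (\<Sum>e\<in>I. s e * (dot m (v e) z)^2) \<le> (1 + eps) * dot m z z)"
proof (cases "m = 0")
  case True
  then show ?thesis by (intro exI[of _ "\<lambda>_. 0"]) (simp add: dot_def)
next
  case False
  obtain r :: nat where r: "2 \<le> r" "real r \<le> 6 / eps"
    and ratio: "(1 - eps) * ((real r + 1) / (real r - 1))^2 \<le> 1 + eps"
    using bss_parameter_exists[OF eps] by blast
  define a where "a = (real r + 1) / (real r - 1)"
  define b where "b = real m * real r * (real r - 1)"
  obtain s where s: "\<forall>e. 0 \<le> s e" "card {e\<in>I. s e \<noteq> 0} \<le> r^2 * m"
    and bounds: "\<And>z. b * dot m z z \<le> (\<Sum>e\<in>I. s e * (dot m (v e) z)^2)"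
      "\<And>z. (\<Sum>e\<in>I. s e * (dot m (v e) z)^2) \<le> b * a^2 * dot m z z"
    using bss_sparsification[OF assms(1,2) r(1)] unfolding a_def b_def by blast
  have b: "0 < b" using False r by (simp add: b_def)
  define c where "c = (1 - eps) / b"
  have c: "0 < c" using eps b by (simp add: c_def)
  show ?thesis
  proof (intro exI[of _ "\<lambda>e. c * s e"] conjI allI)
    show "0 \<le> c * s e" for e using s(1) c by simp
    have "real (card {e\<in>I. c * s e \<noteq> 0}) \<le> real r ^ 2 * real m"
      using of_nat_mono[OF s(2)] c by simp
    also have "\<dots> \<le> (6 / eps)^2 * real m" using r by (intro mult_right_mono power_mono) auto
    also have "\<dots> = 36 * real m / eps^2" by (simp add: power2_eq_square)
    finally show "real (card {e\<in>I. c * s e \<noteq> 0}) \<le> 36 * real m / eps^2" .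
    fix z
    have sum: "(\<Sum>e\<in>I. c * s e * (dot m (v e) z)^2) = c * (\<Sum>e\<in>I. s e * (dot m (v e) z)^2)"
      by (simp add: sum_distrib_left mult_ac)
    have "(1 - eps) * dot m z z = c * (b * dot m z z)" using b by (simp add: c_def)
    also have "\<dots> \<le> c * (\<Sum>e\<in>I. s e * (dot m (v e) z)^2)"
      using bounds(1) c by (simp add: mult_left_mono)
    finally show "(1 - eps) * dot m z z \<le> (\<Sum>e\<in>I. c * s e * (dot m (v e) z)^2)"
      unfolding sum .
    have "c * (\<Sum>e\<in>I. s e * (dot m (v e) z)^2) \<le> c * (b * a^2 * dot m z z)"
      using bounds(2) c by (simp add: mult_left_mono)
    also have "\<dots> = ((1 - eps) * a^2) * dot m z z" using b by (simp add: c_def)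
    also have "\<dots> \<le> (1 + eps) * dot m z z"
      using ratio dot_self_nonneg by (intro mult_right_mono) (auto simp: a_def)
    finally show "(\<Sum>e\<in>I. c * s e * (dot m (v e) z)^2) \<le> (1 + eps) * dot m z z"
      unfolding sum .
  qed
qed

section \<open>Sums of squares of linear forms\<close>

lemma isotropic_residual_orthogonal:
  assumes iso: "isotropic m E v" and "k < m"
  shows "(\<Sum>e\<in>E. (c e - dot m (\<lambda>l. \<Sum>e'\<in>E. c e' * v e' l) (v e)) * v e k) = 0"
proof -
  define a where "a = (\<lambda>l. \<Sum>e\<in>E. c e * v e l)"
  have "(\<Sum>e\<in>E. (c e - dot m a (v e)) * v e k) = a k - (\<Sum>e\<in>E. \<Sum>l<m. a l * (v e l * v e k))"
    unfolding dot_def by (simp add: a_def right_diff_distrib sum_subtractf sum_distrib_left mult_ac)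
  also have "(\<Sum>e\<in>E. \<Sum>l<m. a l * (v e l * v e k)) = (\<Sum>l<m. a l * (\<Sum>e\<in>E. v e l * v e k))"
    by (subst sum.swap) (simp add: sum_distrib_left)
  also have "\<dots> = (\<Sum>l<m. a l * (if l = k then 1 else 0))"
    using iso \<open>k < m\<close> by (intro sum.cong) (auto simp: isotropic_def)
  also have "\<dots> = a k" using \<open>k < m\<close> by (simp add: delta_mult_simps cong: if_cong)
  finally show ?thesis by (simp add: a_def)
qed

lemma isotropic_Suc:
  assumes iso: "isotropic m E v" and orth: "\<And>k. k < m \<Longrightarrow> (\<Sum>e\<in>E. r e * v e k) = 0"
    and nr: "0 < nr" "nr * nr = (\<Sum>e\<in>E. r e * r e)"
  shows "isotropic (Suc m) E (\<lambda>e. (v e)(m := r e / nr))"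
  unfolding isotropic_def
proof (intro allI impI)
  fix k l assume "k < Suc m" "l < Suc m"
  then consider "k < m" "l < m" | "k = m" "l < m" | "k < m" "l = m" | "k = m" "l = m"
    by linarith
  then show "(\<Sum>e\<in>E. ((v e)(m := r e / nr)) k * ((v e)(m := r e / nr)) l) = (if k = l then 1 else 0)"
  proof cases
    case 1
    then show ?thesis using iso by (simp add: isotropic_def)
  next
    case 2
    then show ?thesis using orth[of l] by (simp add: sum_divide_distrib[symmetric])
  next
    case 3
    then show ?thesis using orth[of k] by (simp add: mult.commute sum_divide_distrib[symmetric])
  next
    case 4
    then show ?thesis using nr mult_pos_pos[OF nr(1) nr(1)] by (simp add: sum_divide_distrib[symmetric])
  qed
qed

text \<open>One Gram--Schmidt step. The vectors live on E, and the k-th vector of the orthonormal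
  family is e \<mapsto> v e k.\<close>

lemma isotropic_extend:
  assumes E: "finite E" and iso: "isotropic m E v"
  shows "\<exists>m' v' a. m \<le> m' \<and> m' \<le> Suc m \<and> isotropic m' E v' \<and> (\<forall>e\<in>E. \<forall>k<m. v' e k = v e k)
    \<and> (\<forall>e\<in>E. c e = dot m' a (v' e))"
proof -
  define a where "a = (\<lambda>l. \<Sum>e\<in>E. c e * v e l)"
  define r where "r e = c e - dot m a (v e)" for e
  show ?thesis
  proof (cases "\<forall>e\<in>E. r e = 0")
    case True
    then show ?thesis using iso by (intro exI[of _ m] exI[of _ v] exI[of _ a]) (auto simp: r_def)
  next
    case False
    define nr where "nr = sqrt (\<Sum>e\<in>E. r e * r e)"
    obtain e0 where "e0 \<in> E" "r e0 \<noteq> 0" using False by blast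
    then have "0 < (\<Sum>e\<in>E. r e * r e)"
      using E by (intro sum_pos2[of _ e0]) (auto simp: zero_less_mult_iff)
    then have nr: "0 < nr" "nr * nr = (\<Sum>e\<in>E. r e * r e)" by (simp_all add: nr_def)
    have "isotropic (Suc m) E (\<lambda>e. (v e)(m := r e / nr))"
      using isotropic_Suc[OF iso _ nr] isotropic_residual_orthogonal[OF iso, of _ c]
      unfolding r_def a_def by blast
    moreover have "c e = dot (Suc m) (a(m := nr)) ((v e)(m := r e / nr))" for e
      using nr(1) by (simp add: dot_def r_def)
    ultimately show ?thesis
      by (intro exI[of _ "Suc m"] exI[of _ "\<lambda>e. (v e)(m := r e / nr)"] exI[of _ "a(m := nr)"]) auto
  qed
qed

lemma isotropic_representation:
  fixes c :: "'j \<Rightarrow> 'e \<Rightarrow> real"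
  assumes "finite J" "finite E"
  shows "\<exists>m v \<alpha>. m \<le> card J \<and> isotropic m E v \<and> (\<forall>j\<in>J. \<forall>e\<in>E. c j e = dot m (\<alpha> j) (v e))"
  using assms(1)
proof (induction J rule: finite_induct)
  case empty
  show ?case by (intro exI[of _ 0]) (simp add: isotropic_def)
next
  case (insert j J)
  then obtain m v \<alpha> where m: "m \<le> card J" and iso: "isotropic m E v"
    and rep: "\<forall>i\<in>J. \<forall>e\<in>E. c i e = dot m (\<alpha> i) (v e)" by blast
  obtain m' v' a where m': "m \<le> m'" "m' \<le> Suc m" "isotropic m' E v'"
    and old: "\<forall>e\<in>E. \<forall>k<m. v' e k = v e k" and new: "\<forall>e\<in>E. c j e = dot m' a (v' e)"
    using isotropic_extend[OF assms(2) iso, of "c j"] by blast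
  define \<alpha>' where "\<alpha>' i = (if i = j then a else (\<lambda>k. if k < m then \<alpha> i k else 0))" for i
  have "c i e = dot m' (\<alpha>' i) (v' e)" if "i \<in> J" "e \<in> E" for i e
  proof -
    have "dot m' (\<alpha>' i) (v' e) = (\<Sum>k<m'. if k < m then \<alpha> i k * v e k else 0)"
      unfolding dot_def \<alpha>'_def using that insert(2) old by (intro sum.cong) auto
    also have "\<dots> = dot m (\<alpha> i) (v e)"
      unfolding dot_def sum.inter_filter[OF finite_lessThan, symmetric]
      using m'(1) by (intro sum.cong) auto
    finally show ?thesis using rep that by simp
  qed
  moreover have "\<forall>e\<in>E. c j e = dot m' (\<alpha>' j) (v' e)" using new by (simp add: \<alpha>'_def)
  moreover have "m' \<le> card (insert j J)" using m m'(2) insert by simp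
  ultimately show ?case using m'(3) by (intro exI[of _ m'] exI[of _ v'] exI[of _ \<alpha>']) blast
qed

theorem sum_of_squares_sparsification:
  fixes c :: "'j \<Rightarrow> 'e \<Rightarrow> real"
  assumes J: "finite J" and E: "finite E" and eps: "0 < eps" "eps < 1"
  shows "\<exists>s. (\<forall>e. 0 \<le> s e) \<and> real (card {e\<in>E. s e \<noteq> 0}) \<le> 36 * real (card J) / eps^2 \<and>
     (\<forall>x. (1 - eps) * (\<Sum>e\<in>E. (\<Sum>j\<in>J. c j e * x j)^2) \<le> (\<Sum>e\<in>E. s e * (\<Sum>j\<in>J. c j e * x j)^2)
        \<and> (\<Sum>e\<in>E. s e * (\<Sum>j\<in>J. c j e * x j)^2) \<le> (1 + eps) * (\<Sum>e\<in>E. (\<Sum>j\<in>J. c j e * x j)^2))"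
proof -
  obtain m v \<alpha> where m: "m \<le> card J" and iso: "isotropic m E v"
    and rep: "\<forall>j\<in>J. \<forall>e\<in>E. c j e = dot m (\<alpha> j) (v e)"
    using isotropic_representation[OF J E, of c] by blast
  obtain s where s: "\<forall>e. 0 \<le> s e" "real (card {e\<in>E. s e \<noteq> 0}) \<le> 36 * real m / eps^2"
    and bounds: "\<forall>z. (1 - eps) * dot m z z \<le> (\<Sum>e\<in>E. s e * (dot m (v e) z)^2)
        \<and> (\<Sum>e\<in>E. s e * (dot m (v e) z)^2) \<le> (1 + eps) * dot m z z"
    using spectral_sparsification[OF E iso eps] by blast
  have "36 * real m / eps^2 \<le> 36 * real (card J) / eps^2"
    using m by (simp add: divide_right_mono)
  moreover have "(\<Sum>e\<in>E. (\<Sum>j\<in>J. c j e * x j)^2) = dot m z z"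
    and "(\<Sum>e\<in>E. s e * (\<Sum>j\<in>J. c j e * x j)^2) = (\<Sum>e\<in>E. s e * (dot m (v e) z)^2)"
    if z: "z = (\<lambda>k. \<Sum>j\<in>J. \<alpha> j k * x j)" for x z
  proof -
    have form: "(\<Sum>j\<in>J. c j e * x j) = dot m (v e) z" if "e \<in> E" for e
      using rep that unfolding z dot_def
      by (simp add: sum_distrib_left sum_distrib_right mult_ac) (rule sum.swap)
    have "(\<Sum>e\<in>E. (dot m (v e) z)^2) = (\<Sum>e\<in>E. quad m (outer m z) (v e))"
      by (simp add: quad_outer dot_commute)
    also have "\<dots> = dot m z z" by (simp add: isotropic_sum_quad[OF E iso] tr_outer)
    finally show "(\<Sum>e\<in>E. (\<Sum>j\<in>J. c j e * x j)^2) = dot m z z" using form by simp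
    show "(\<Sum>e\<in>E. s e * (\<Sum>j\<in>J. c j e * x j)^2) = (\<Sum>e\<in>E. s e * (dot m (v e) z)^2)"
      using form by simp
  qed
  ultimately show ?thesis using s bounds by (intro exI[of _ s]) force
qed

section \<open>Cut sparsifiers\<close>

text \<open>Cuts of the bipartite double cover of the constraint graph: the tail of a constraint
  is labelled by f and its head by g.\<close>

definition cut_val :: "('v \<times> 'v) set \<Rightarrow> ('v \<times> 'v \<Rightarrow> real) \<Rightarrow> ('v \<Rightarrow> bool) \<Rightarrow> ('v \<Rightarrow> bool) \<Rightarrow> real"
  where "cut_val E w f g = (\<Sum>e\<in>E. w e * (if f (fst e) \<noteq> g (snd e) then 1 else 0))"

text \<open>A cut value is the sum of squares sum w_e (x_(u,tail) - x_(v,head))^2 of a linear form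
  in 2 |V| variables, evaluated at the 0/1 labelling.\<close>

theorem cut_sparsifier_exists:
  fixes V :: "'v set" and E :: "('v \<times> 'v) set"
  assumes V: "finite V" and EV: "E \<subseteq> V \<times> V" and w: "\<forall>e\<in>E. 0 < w e"
    and eps: "0 < eps" "eps < 1"
  shows "\<exists>E' w'. E' \<subseteq> E \<and> (\<forall>e\<in>E'. 0 < w' e) \<and> real (card E') \<le> 72 * real (card V) / eps^2 \<and>
    (\<forall>f g. (1 - eps) * cut_val E w f g \<le> cut_val E' w' f g \<and> cut_val E' w' f g \<le> (1 + eps) * cut_val E w f g)"
proof -
  define J where "J = V \<times> (UNIV :: bool set)"
  have J: "finite J" "card J = 2 * card V" using V by (simp_all add: J_def card_cartesian_product)
  have E: "finite E" using V EV finite_subset by blast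
  define c where "c j e = sqrt (w e) * ((if j = (fst e, True) then 1 else 0)
      - (if j = (snd e, False) then 1 else 0))" for j :: "'v \<times> bool" and e :: "'v \<times> 'v"
  obtain s where s: "\<forall>e. 0 \<le> s e" "real (card {e\<in>E. s e \<noteq> 0}) \<le> 36 * real (card J) / eps^2"
    and bounds: "\<forall>x. (1 - eps) * (\<Sum>e\<in>E. (\<Sum>j\<in>J. c j e * x j)^2) \<le> (\<Sum>e\<in>E. s e * (\<Sum>j\<in>J. c j e * x j)^2)
        \<and> (\<Sum>e\<in>E. s e * (\<Sum>j\<in>J. c j e * x j)^2) \<le> (1 + eps) * (\<Sum>e\<in>E. (\<Sum>j\<in>J. c j e * x j)^2)"
    using sum_of_squares_sparsification[OF J(1) E eps, of c] by blast
  define E' where "E' = {e\<in>E. s e \<noteq> 0}"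
  define w' where "w' e = s e * w e" for e
  have "cut_val E w f g = (\<Sum>e\<in>E. (\<Sum>j\<in>J. c j e * x j)^2)"
    and "cut_val E' w' f g = (\<Sum>e\<in>E. s e * (\<Sum>j\<in>J. c j e * x j)^2)"
    if x: "x = (\<lambda>(v, tail). if (if tail then f v else g v) then 1 else 0)" for f g x
  proof -
    have sq: "(\<Sum>j\<in>J. c j e * x j)^2 = w e * (if f (fst e) \<noteq> g (snd e) then 1 else 0)"
      if "e \<in> E" for e
    proof -
      have "(fst e, True) \<in> J" "(snd e, False) \<in> J" using that EV by (auto simp: J_def)
      then have "(\<Sum>j\<in>J. c j e * x j) = sqrt (w e) * (x (fst e, True) - x (snd e, False))"
        using J(1) by (simp add: c_def algebra_simps sum_subtractf delta_mult_simps cong: if_cong)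
      moreover have "0 \<le> w e" using w that by (simp add: less_imp_le)
      ultimately show ?thesis by (simp add: x power_mult_distrib)
    qed
    then show "cut_val E w f g = (\<Sum>e\<in>E. (\<Sum>j\<in>J. c j e * x j)^2)"
      by (simp add: cut_val_def)
    have "(\<Sum>e\<in>E. s e * (\<Sum>j\<in>J. c j e * x j)^2)
        = (\<Sum>e\<in>E. if s e \<noteq> 0 then w' e * (if f (fst e) \<noteq> g (snd e) then 1 else 0) else 0)"
      by (intro sum.cong refl) (auto simp: sq w'_def)
    also have "\<dots> = cut_val E' w' f g"
      unfolding cut_val_def E'_def by (rule sum.inter_filter[OF E, symmetric])
    finally show "cut_val E' w' f g = (\<Sum>e\<in>E. s e * (\<Sum>j\<in>J. c j e * x j)^2)" by simp
  qed
  moreover have "\<forall>e\<in>E'. 0 < w' e"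
    using s(1) w by (auto simp: E'_def w'_def less_le)
  moreover have "real (card E') \<le> 72 * real (card V) / eps^2"
    using s(2) J(2) by (simp add: E'_def)
  ultimately show ?thesis
    using bounds by (intro exI[of _ E'] exI[of _ w']) (auto simp: E'_def)
qed

section \<open>Predicates without singleton restrictions\<close>

lemma zero_sets_eq_or_disjoint:
  assumes nos: "\<not> (\<exists>B C. card B = 2 \<and> card C = 2 \<and> singleton_restr P B C)"
  shows "{y. \<not> P x y} = {y. \<not> P x' y} \<or> {y. \<not> P x y} \<inter> {y. \<not> P x' y} = {}"
proof (rule ccontr)
  assume "\<not> ?thesis"
  then obtain y where y: "\<not> P x y" "\<not> P x' y" and ne: "{y. \<not> P x y} \<noteq> {y. \<not> P x' y}" by auto
  have False if "\<not> P a y" "\<not> P b y" "\<not> P a z" "P b z" for a b z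
  proof -
    have "a \<noteq> b" "z \<noteq> y" using that by auto
    moreover have "{(b', c'). b' \<in> {b, a} \<and> c' \<in> {z, y} \<and> P b' c'} = {(b, z)}" using that by auto
    then have "singleton_restr P {b, a} {z, y}" by (simp add: singleton_restr_def)
    ultimately show False using nos by (metis card_2_iff)
  qed
  moreover obtain z where "(\<not> P x z \<and> P x' z) \<or> (\<not> P x' z \<and> P x z)" using ne by auto
  ultimately show False using y by blast
qed

lemma sum_indicator_disjoint:
  assumes "finite F" "\<And>S S'. S \<in> F \<Longrightarrow> S' \<in> F \<Longrightarrow> y \<in> S \<Longrightarrow> y \<in> S' \<Longrightarrow> S = S'"
  shows "(\<Sum>S\<in>F. if y \<in> S then 1 else 0 :: real) = (if y \<in> \<Union>F then 1 else 0)"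
proof (cases "y \<in> \<Union>F")
  case True
  then obtain S0 where "S0 \<in> F" "y \<in> S0" by auto
  then have "{S\<in>F. y \<in> S} = {S0}" using assms(2) by auto
  then show ?thesis using True by (simp add: sum.inter_filter[OF assms(1), symmetric])
qed auto

text \<open>The sets T x = {y. \<not> P x y} partition part of the domain, so P x y holds iff y avoids
  the block T x; this is expressed through one cut per block and one for the uncovered
  part of the domain.\<close>

lemma twice_pred_eq_cut_sum:
  fixes P :: "'d::finite \<Rightarrow> 'd \<Rightarrow> bool"
  assumes nos: "\<not> (\<exists>B C :: 'd set. card B = 2 \<and> card C = 2 \<and> singleton_restr P B C)"
  defines "T \<equiv> \<lambda>x. {y. \<not> P x y}"
  shows "2 * (if P x y then 1 else 0 :: real)
    = (if y \<notin> \<Union>(range T) then 1 else 0) + (\<Sum>S\<in>range T. if (T x = S) \<noteq> (y \<in> S) then 1 else 0)"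
proof -
  let ?R = "range T"
  have fin: "finite ?R" by simp
  have disj: "S = S'" if "S \<in> ?R" "S' \<in> ?R" "y \<in> S" "y \<in> S'" for S S'
    using that zero_sets_eq_or_disjoint[OF nos] by (auto simp: T_def)
  define h where "h S = (if (T x = S) \<noteq> (y \<in> S) then 1 else 0 :: real)" for S
  have "sum h ?R = h (T x) + sum h (?R - {T x})"
    by (rule sum.remove[OF fin]) simp
  also have "sum h (?R - {T x}) = (\<Sum>S\<in>?R - {T x}. if y \<in> S then 1 else 0)"
  proof (rule sum.cong)
    fix S assume "S \<in> ?R - {T x}"
    then have "T x \<noteq> S" by blast
    then show "h S = (if y \<in> S then 1 else 0)" by (simp add: h_def)
  qed (rule refl)
  also have "\<dots> = (if y \<in> \<Union>(?R - {T x}) then 1 else 0)"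
    by (rule sum_indicator_disjoint) (simp add: fin, meson DiffD1 disj)
  also have "h (T x) = (if y \<in> T x then 0 else 1)" by (simp add: h_def)
  finally have sum: "sum h ?R = (if y \<in> T x then 0 else 1) + (if y \<in> \<Union>(?R - {T x}) then 1 else 0)" .
  have Py: "P x y \<longleftrightarrow> y \<notin> T x" by (simp add: T_def)
  show ?thesis
  proof (cases "y \<in> T x")
    case True
    then have "y \<notin> \<Union>(?R - {T x})" "y \<in> \<Union>?R" using disj by blast+
    then show ?thesis using True sum Py by (simp add: h_def)
  next
    case False
    then have "y \<in> \<Union>(?R - {T x}) \<longleftrightarrow> y \<in> \<Union>?R" by blast
    then show ?thesis using False sum Py by (simp add: h_def)
  qed
qed

lemma csp_val_cut_decomposition:
  assumes "\<And>a b. c * (if P a b then 1 else 0) = (\<Sum>k\<in>K. if f k a \<noteq> g k b then 1 else 0)"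
  shows "c * csp_val P E w A = (\<Sum>k\<in>K. cut_val E w (f k \<circ> A) (g k \<circ> A))"
proof -
  have "c * csp_val P E w A = (\<Sum>e\<in>E. \<Sum>k\<in>K. w e * (if f k (A (fst e)) \<noteq> g k (A (snd e)) then 1 else 0))"
    unfolding csp_val_def sum_distrib_left
    by (intro sum.cong refl) (simp add: mult.left_commute[of c] assms sum_distrib_left)
  also have "\<dots> = (\<Sum>k\<in>K. cut_val E w (f k \<circ> A) (g k \<circ> A))"
    unfolding cut_val_def by (subst sum.swap) simp
  finally show ?thesis .
qed

lemma sparsifier_of_cut_sparsifier:
  fixes c :: real and f g :: "'k \<Rightarrow> 'd \<Rightarrow> bool"
  assumes c: "0 < c"
    and decomp: "\<And>a b. c * (if P a b then 1 else 0) = (\<Sum>k\<in>K. if f k a \<noteq> g k b then 1 else 0)"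
    and sub: "E' \<subseteq> E" "\<forall>e\<in>E'. 0 < w' e"
    and cuts: "\<forall>f g. (1 - eps) * cut_val E w f g \<le> cut_val E' w' f g
                   \<and> cut_val E' w' f g \<le> (1 + eps) * cut_val E w f g"
  shows "is_sparsifier P eps E w E' w'"
proof -
  have val: "c * csp_val P E0 w0 A = (\<Sum>k\<in>K. cut_val E0 w0 (f k \<circ> A) (g k \<circ> A))"
    for E0 w0 A
    by (rule csp_val_cut_decomposition) (rule decomp)
  have "(1 - eps) * csp_val P E w A \<le> csp_val P E' w' A
      \<and> csp_val P E' w' A \<le> (1 + eps) * csp_val P E w A" for A
  proof -
    have "c * ((1 - eps) * csp_val P E w A) \<le> c * csp_val P E' w' A"
      and "c * csp_val P E' w' A \<le> c * ((1 + eps) * csp_val P E w A)"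
      unfolding mult.left_commute[of c] val sum_distrib_left using cuts by (simp_all add: sum_mono)
    then show ?thesis using c by simp
  qed
  then show ?thesis using sub unfolding is_sparsifier_def by blast
qed

theorem sparsifier_exists:
  fixes P :: "'d::finite \<Rightarrow> 'd \<Rightarrow> bool"
  assumes nos: "\<not> (\<exists>B C :: 'd set. card B = 2 \<and> card C = 2 \<and> singleton_restr P B C)"
    and eps: "0 < eps" "eps < 1" and inst: "csp_instance V E w"
  shows "\<exists>E' w'. is_sparsifier P eps E w E' w' \<and> real (card E') \<le> 72 * real (card V) / eps^2"
proof -
  have "finite V" "E \<subseteq> V \<times> V" "\<forall>e\<in>E. 0 < w e"
    using inst by (auto simp: csp_instance_def)
  from cut_sparsifier_exists[OF this eps] obtain E' w'
    where E': "E' \<subseteq> E" "\<forall>e\<in>E'. 0 < w' e" "real (card E') \<le> 72 * real (card V) / eps^2"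
    and cuts: "\<forall>f g. (1 - eps) * cut_val E w f g \<le> cut_val E' w' f g
                   \<and> cut_val E' w' f g \<le> (1 + eps) * cut_val E w f g"
    by blast
  define T where "T x = {y. \<not> P x y}" for x
  define f where "f k a = (case k of None \<Rightarrow> False | Some S \<Rightarrow> T a = S)" for k a
  define g where "g k b = (case k of None \<Rightarrow> b \<notin> \<Union>(range T) | Some S \<Rightarrow> b \<in> S)" for k b
  have "2 * (if P a b then 1 else 0 :: real)
      = (\<Sum>k\<in>insert None (Some ` range T). if f k a \<noteq> g k b then 1 else 0)" for a b
  proof -
    have "(\<Sum>k\<in>insert None (Some ` range T). if f k a \<noteq> g k b then 1 else 0 :: real)
        = (if b \<notin> \<Union>(range T) then 1 else 0) + (\<Sum>S\<in>range T. if (T a = S) \<noteq> (b \<in> S) then 1 else 0)"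
      by (simp add: sum.reindex f_def g_def del: range_composition)
    then show ?thesis using twice_pred_eq_cut_sum[OF nos, of a b, folded T_def] by simp
  qed
  from sparsifier_of_cut_sparsifier[where c = 2 and f = f and g = g, OF _ this E'(1,2) cuts]
  show ?thesis using E'(3) by auto
qed

section \<open>Instances that cannot be sparsified\<close>

lemma sparsifier_keeps_isolated_constraint:
  assumes sp: "is_sparsifier P eps E w E' w'" and "eps < 1" "finite E" "e \<in> E" "0 < w e"
    and iso: "\<And>e'. e' \<in> E \<Longrightarrow> P (A (fst e')) (A (snd e')) \<longleftrightarrow> e' = e"
  shows "e \<in> E'"
proof (rule ccontr)
  assume "e \<notin> E'"
  have "E' \<subseteq> E" using sp by (simp add: is_sparsifier_def)
  then have "csp_val P E' w' A = 0"
    unfolding csp_val_def using iso \<open>e \<notin> E'\<close> by (intro sum.neutral) auto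
  moreover have "csp_val P E w A = w e"
    unfolding csp_val_def using iso assms(3,4) by (simp add: delta_mult_simps cong: if_cong)
  ultimately have "(1 - eps) * w e \<le> 0" using sp unfolding is_sparsifier_def by metis
  moreover have "0 < (1 - eps) * w e" using assms(2,5) by simp
  ultimately show False by simp
qed

lemma singleton_restr_witnesses:
  assumes "card B = 2" "card C = 2" "singleton_restr P B C"
  obtains b1 b2 c1 c2 where "P b1 c1" "\<not> P b1 c2" "\<not> P b2 c1" "\<not> P b2 c2"
proof -
  obtain p where "{(b, c). b \<in> B \<and> c \<in> C \<and> P b c} = {p}"
    using assms(3) unfolding singleton_restr_def by (meson card_1_singletonE)
  moreover obtain b1 c1 where "p = (b1, c1)" by (cases p)
  ultimately have p: "{(b, c). b \<in> B \<and> c \<in> C \<and> P b c} = {(b1, c1)}" by simp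
  then have b1: "b1 \<in> B" "c1 \<in> C" "P b1 c1" by blast+
  have uniq: "b = b1 \<and> c = c1" if "b \<in> B" "c \<in> C" "P b c" for b c
    using p that by blast
  obtain b2 where b2: "b2 \<in> B" "b2 \<noteq> b1" using assms(1) b1(1) by (metis card_2_iff insert_iff)
  obtain c2 where c2: "c2 \<in> C" "c2 \<noteq> c1" using assms(2) b1(2) by (metis card_2_iff insert_iff)
  show ?thesis
    by (rule that[of b1 c1 c2 b2]) (use uniq b1 b2 c2 in blast)+
qed

lemma singleton_restr_lower_bound:
  assumes B: "card B = 2" and C: "card C = 2" and sing: "singleton_restr P B C" and eps: "eps < 1"
  shows "\<exists>n\<ge>N. \<exists>(V::nat set) E w. csp_instance V E w \<and> card V = n \<and>
           (\<forall>E' w'. is_sparsifier P eps E w E' w' \<longrightarrow> 1/4 * (real n)^2 \<le> real (card E'))"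
proof -
  obtain b1 b2 c1 c2 where P: "P b1 c1" "\<not> P b1 c2" "\<not> P b2 c1" "\<not> P b2 c2"
    by (rule singleton_restr_witnesses[OF B C sing])
  define k where "k = Suc N"
  define V where "V = {0..<2*k}"
  define E where "E = {0..<k} \<times> {k..<2*k}"
  define w where "w = (\<lambda>_::nat \<times> nat. 1::real)"
  have keep: "E' = E" if sp: "is_sparsifier P eps E w E' w'" for E' w'
  proof
    show "E' \<subseteq> E" using sp by (simp add: is_sparsifier_def)
    show "E \<subseteq> E'"
    proof
      fix e assume e: "e \<in> E"
      obtain i j where "e = (i, j)" by (cases e)
      then have ij: "e = (i, j)" "i < k" "k \<le> j" using e by (auto simp: E_def)
      define A where "A z = (if z < k then if z = i then b1 else b2 else if z = j then c1 else c2)"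
        for z
      have "P (A (fst e')) (A (snd e')) \<longleftrightarrow> e' = e" if "e' \<in> E" for e'
      proof -
        obtain a b where ab: "e' = (a, b)" by (cases e')
        then have "A a = (if a = i then b1 else b2)" "A b = (if b = j then c1 else c2)"
          using that ij by (auto simp: E_def A_def)
        then have "P (A a) (A b) \<longleftrightarrow> a = i \<and> b = j" using P by auto
        then show ?thesis using ab ij by simp
      qed
      from sparsifier_keeps_isolated_constraint[OF sp eps _ e _ this]
      show "e \<in> E'" by (simp add: E_def w_def)
    qed
  qed
  show ?thesis
  proof (intro exI[of _ "2*k"] conjI exI[of _ V] exI[of _ E] exI[of _ w] allI impI)
    show "N \<le> 2 * k" by (simp add: k_def)
    show "csp_instance V E w" by (auto simp: csp_instance_def V_def E_def w_def)
    show "card V = 2 * k" by (simp add: V_def)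
    fix E' w' assume "is_sparsifier P eps E w E' w'"
    then have "E' = E" by (rule keep)
    then show "1/4 * (real (2*k))^2 \<le> real (card E')"
      by (simp add: E_def card_cartesian_product power2_eq_square)
  qed
qed

theorem theorem2:
  fixes P :: "'d::finite \<Rightarrow> 'd \<Rightarrow> bool"
  assumes "card (UNIV :: 'd set) \<ge> 2"
  shows "((\<exists>B C :: 'd set. card B = 2 \<and> card C = 2 \<and> singleton_restr P B C) \<longrightarrow>
           (\<forall>eps::real. 0 < eps \<and> eps < 1 \<longrightarrow>
              (\<exists>c::real. c > 0 \<and> (\<forall>N::nat. \<exists>n\<ge>N. \<exists>(V::nat set) E w.
                  csp_instance V E w \<and> card V = n \<and>
                  (\<forall>E' w'. is_sparsifier P eps E w E' w' \<longrightarrow> real (card E') \<ge> c * (real n)^2)))))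
       \<and> ((\<not> (\<exists>B C :: 'd set. card B = 2 \<and> card C = 2 \<and> singleton_restr P B C)) \<longrightarrow>
           (\<exists>K::real. K > 0 \<and> (\<forall>eps::real. 0 < eps \<and> eps < 1 \<longrightarrow>
              (\<forall>(V::'v set) E w. csp_instance V E w \<longrightarrow>
                 (\<exists>E' w'. is_sparsifier P eps E w E' w' \<and>
                    real (card E') \<le> K * real (card V) / eps^2)))))"
  apply (intro conjI impI allI)
  subgoal using singleton_restr_lower_bound by (intro exI[of _ "1/4"]) (simp, blast)
  subgoal using sparsifier_exists by (intro exI[of _ 72]) auto
  done

end
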